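(* Let $f:\mathfrak X\times\mathbb R\to\mathbb R^{r_1}\times\mathbb C^{r_2}$ be as in the context. Then: (i) For each $\alpha\in\mathfrak I$, let $\alpha_1,\dots,\alpha_{r_2}\in\mathbb R$ be such that $\alpha_j\le\Omega_j(\kappa)\le\alpha_j+1$ for all $\kappa\in\mathfrak X_\alpha$ (such numbers exist). Then $$f(\mathfrak X_\alpha\times\mathbb R)\subset\mathcal H_\alpha:=\mathbb R_+^{r_1}\times H\big(\tfrac{\alpha_1+1/2}{N_1}\big)\times\cdots\times H\big(\tfrac{\alpha_{r_2}+1/2}{N_{r_2}}\big),$$ where $H(t)=\{\rho e^{2\pi i(t+\theta)}:\rho>0,\ \theta\in(-1/4,1/4)\}$. In particular $f(\mathfrak X\times\mathbb R)\subset\mathbb R_+^{r_1}\times(\mathbb C^* )^{r_2}$. (ii) If $v_0,\dots,v_{n-1}$ are the vertices of $\mathfrak X_\alpha$ and $w_i:=f(v_i\times0)\in k$, then $f(\mathfrak X_\alpha\times\mathbb R)=\{\sum_{i=0}^{n-1}t_iw_i: t_i\ge0\}\setminus\{0\}$. (iii) If $x,x'\in\mathfrak X$, $\lambda\in\Lambda$ with $x'=x+\lambda$, and $y\in\mathbb R$, then $f(x'\times y)=\varepsilon(\lambda)f(x\times y)$, where $\varepsilon(\lambda):=\prod_{\ell=1}^r\varepsilon_\ell^{\lambda[\ell]}$.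
   Context: Number field setup: $k$ is a number field of degree $n=r_1+2r_2$ with real embeddings $\tau_1,\dots,\tau_{r_1}$ and complex embeddings $\tau_{r_1+1},\dots,\tau_{r_1+r_2}$ (one from each conjugate pair). We identify $\gamma\in k$ with $(\gamma^{(i)})_i\in\mathbb R^{r_1}\times\mathbb C^{r_2}$, $\gamma^{(i)}=\tau_i(\gamma)$; this ring has componentwise operations. $r=r_1+r_2-1$; $\varepsilon_1,\dots,\varepsilon_r$ are multiplicatively independent totally positive units; $N_j\ge3$ integers; $\arg\in(-\pi,\pi]$; $\Lambda:=\mathbb Z^r\times N_1\mathbb Z\times\cdots\times N_{r_2}\mathbb Z\subset\mathbb R^{n-1}$; $\Omega_j(\kappa):=\kappa[r+j]+\frac{N_j}{2\pi}\sum_{\ell=1}^r\kappa[\ell]\arg(\varepsilon_\ell^{(r_1+j)})$. The complex $\mathfrak X=\bigcup_{\alpha\in\mathfrak I}\mathfrak X_\alpha\subset\mathbb R^{n-1}$ is a simplicial complex of $(n-1)$-simplices with integral vertices, constructed as follows. For an ordered $p$-complex $X=\bigcup X_\alpha\subset V$ (simplices with total orders $\prec_\alpha$ on vertices), linear $\omega:V\to\mathbb R$ and integers $M_1<M_2$, let $A:V\to(0,1]$ with $A(u)-\omega(u)\in\mathbb Z$, $a(u)=A(u)-\omega(u)$, order $u\prec_\alpha^Au'$ iff $A(u)<A(u')$ or ($A(u)=A(u')$ and $u\prec_\alpha u'$); for $\gamma=(\alpha,v,\ell)$ with $v$ a vertex of $X_\alpha$ and $M_1\le\ell<M_2$ an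 integer, list vertices $v_0\prec_\alpha^A\cdots\prec_\alpha^Av_p$ with $v=v_j$, and let $Y_\gamma$ be the convex hull of $v_i\times(a(v_i)+\ell)$ ($i\le j$) and $v_i\times(a(v_i)+\ell-1)$ ($i\ge j$), ordered by $\rho\prec_\gamma\rho'$ iff $\pi_V(\rho)\prec_\alpha\pi_V(\rho')$ or ($\pi_V(\rho)=\pi_V(\rho')$ and the last coordinate of $\rho'$ is smaller); $Y(X,\omega,[M_1,M_2])=\bigcup_\gamma Y_\gamma$. Then $X_0=\{0\}\subset\mathbb R^0$, $X_j=Y(X_{j-1},0,[0,1])$ for $1\le j\le r$, $X_{r+j}=Y(X_{r+j-1},\omega_{r+j-1},[0,N_j])$ for $1\le j\le r_2$ with $\omega_{r+j-1}(x)=\frac{N_j}{2\pi}\sum_{\ell=1}^rx[\ell]\arg(\varepsilon_\ell^{(r_1+j)})$, and $\mathfrak X:=X_{n-1}$. Twister: $\beta:\mathbb Z^{n-1}\to k^*$ with each $\beta(x)$ totally positive; for each $1\le j\le r_2$ there is $t_j(x)$ with $|t_j(x)|/N_j<\frac14-\frac1{2N_j}$ and $\beta(x)^{(r_1+j)}/|\beta(x)^{(r_1+j)}|=\exp(2\pi i(x[r+j]+t_j(x))/N_j)$; $\beta(x+\lambda)=\beta(x)$ for $\lambda\in\Lambda$. The map $f$: for a vertex $v\in\mathbb Z^{n-1}$ set $\tilde f(v)=\beta(v)\prod_{\ell=1}^r\varepsilon_\ell^{v[\ell]}\in k^*$; let $A:\mathfrak X\to\mathbb R^{r_1}\times\mathbb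 C^{r_2}$ be the continuous map that is affine on each $\mathfrak X_\alpha$ and equals $\tilde f$ on vertices; $f(x\times y):=e^yA(x)$ for $x\in\mathfrak X$, $y\in\mathbb R$. *)

theory Defs
  imports "HOL-Analysis.Analysis" "HOL-Computational_Algebra.Polynomial"
begin

text \<open>k is modelled as an abstract field of characteristic 0 ('a).
  tau i (1 \<le> i \<le> r1+r2) are the embeddings into C: tau 1..tau r1 real,
  tau (r1+1)..tau (r1+r2) complex, one from each conjugate pair.\<close>

definition is_ring_hom_C :: "('a::field_char_0 \<Rightarrow> complex) \<Rightarrow> bool" where
  "is_ring_hom_C s \<longleftrightarrow> (\<forall>x y. s (x + y) = s x + s y) \<and> (\<forall>x y. s (x * y) = s x * s y) \<and> s 1 = 1"

definition number_field_emb :: "nat \<Rightarrow> nat \<Rightarrow> (nat \<Rightarrow> 'a::field_char_0 \<Rightarrow> complex) \<Rightarrow> bool" where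
  "number_field_emb r1 r2 tau \<longleftrightarrow>
     \<comment> \<open>k has degree n = r1 + 2 r2 over Q\<close>
     (\<exists>b :: nat \<Rightarrow> 'a.
        (\<forall>x. \<exists>q :: nat \<Rightarrow> rat. x = (\<Sum>i<r1 + 2*r2. of_rat (q i) * b i)) \<and>
        (\<forall>q :: nat \<Rightarrow> rat. (\<Sum>i<r1 + 2*r2. of_rat (q i) * b i) = 0 \<longrightarrow> (\<forall>i<r1 + 2*r2. q i = 0))) \<and>
     (\<forall>i\<in>{1..r1+r2}. is_ring_hom_C (tau i)) \<and>
     (\<forall>i\<in>{1..r1}. \<forall>x. tau i x \<in> \<real>) \<and>
     (\<forall>i\<in>{r1+1..r1+r2}. \<exists>x. tau i x \<notin> \<real>) \<and>
     (\<forall>i\<in>{1..r1+r2}. \<forall>j\<in>{1..r1+r2}. i \<noteq> j \<longrightarrow> tau i \<noteq> tau j \<and> tau i \<noteq> (cnj \<circ> tau j)) \<and>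
     (\<forall>s. is_ring_hom_C s \<longrightarrow> (\<exists>i\<in>{1..r1+r2}. s = tau i \<or> s = cnj \<circ> tau i))"

definition nf_unit :: "'a::field_char_0 \<Rightarrow> bool" where
  "nf_unit e \<longleftrightarrow> e \<noteq> 0 \<and> algebraic_int e \<and> algebraic_int (inverse e)"

definition totally_positive :: "nat \<Rightarrow> (nat \<Rightarrow> 'a::field_char_0 \<Rightarrow> complex) \<Rightarrow> 'a \<Rightarrow> bool" where
  "totally_positive r1 tau x \<longleftrightarrow> x \<noteq> 0 \<and> (\<forall>i\<in>{1..r1}. tau i x \<in> \<real> \<and> Re (tau i x) > 0)"

text \<open>The identification k \<subseteq> R^r1 x C^r2: coordinates indexed 1..r1+r2 (0 elsewhere).\<close>
definition emb :: "nat \<Rightarrow> nat \<Rightarrow> (nat \<Rightarrow> 'a \<Rightarrow> complex) \<Rightarrow> 'a \<Rightarrow> (nat \<Rightarrow> complex)" where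
  "emb r1 r2 tau g = (\<lambda>i. if i \<in> {1..r1+r2} then tau i g else 0)"

text \<open>Points of R^m are functions nat \<Rightarrow> real with coordinates x[1..m], zero elsewhere.\<close>

definition int_points :: "nat \<Rightarrow> (nat \<Rightarrow> int) set" where
  "int_points m = {x. \<forall>l. (l = 0 \<or> l > m) \<longrightarrow> x l = 0}"

definition Lattice :: "nat \<Rightarrow> nat \<Rightarrow> (nat \<Rightarrow> nat) \<Rightarrow> (nat \<Rightarrow> int) set" where
  "Lattice r r2 N = {x \<in> int_points (r + r2). \<forall>j\<in>{1..r2}. int (N j) dvd x (r + j)}"

definition eps_pow :: "nat \<Rightarrow> (nat \<Rightarrow> 'a::field_char_0) \<Rightarrow> (nat \<Rightarrow> int) \<Rightarrow> 'a" where
  "eps_pow r eps x = (\<Prod>l\<in>{1..r}. eps l powi x l)"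

definition twister :: "nat \<Rightarrow> nat \<Rightarrow> (nat \<Rightarrow> 'a::field_char_0 \<Rightarrow> complex) \<Rightarrow> (nat \<Rightarrow> nat)
    \<Rightarrow> ((nat \<Rightarrow> int) \<Rightarrow> 'a) \<Rightarrow> bool" where
  "twister r1 r2 tau N beta \<longleftrightarrow>
     (let r = r1 + r2 - 1 in
       (\<forall>x\<in>int_points (r + r2). totally_positive r1 tau (beta x)) \<and>
       (\<forall>x\<in>int_points (r + r2). \<forall>j\<in>{1..r2}. \<exists>t::real.
           \<bar>t\<bar> / real (N j) < 1/4 - 1 / (2 * real (N j)) \<and>
           tau (r1 + j) (beta x) / complex_of_real (cmod (tau (r1 + j) (beta x)))
             = exp (2 * complex_of_real pi * \<i> * complex_of_real ((real_of_int (x (r + j)) + t) / real (N j)))) \<and>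
       (\<forall>x\<in>int_points (r + r2). \<forall>lam\<in>Lattice r r2 N. beta (\<lambda>l. x l + lam l) = beta x))"

text \<open>An ordered simplex is a list of its (integral) vertices in increasing order;
  a vertex of R^m is an int list of length m (its coordinates x[1],...,x[m]).\<close>

type_synonym vertex = "int list"
type_synonym osimplex = "vertex list"

definition Acoord :: "(vertex \<Rightarrow> real) \<Rightarrow> vertex \<Rightarrow> real" where
  "Acoord \<omega> u = \<omega> u - of_int \<lceil>\<omega> u\<rceil> + 1"    \<comment> \<open>the unique A(u) \<in> (0,1] with A(u) - \<omega>(u) \<in> Z\<close>

definition acoord :: "(vertex \<Rightarrow> real) \<Rightarrow> vertex \<Rightarrow> int" where
  "acoord \<omega> u = 1 - \<lceil>\<omega> u\<rceil>"                \<comment> \<open>a(u) = A(u) - \<omega>(u)\<close>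

text \<open>Position of the i-th vertex of S in the order \<prec>^A.\<close>
definition Arank :: "(vertex \<Rightarrow> real) \<Rightarrow> osimplex \<Rightarrow> nat \<Rightarrow> nat" where
  "Arank \<omega> S i = card {i'. i' < length S \<and>
      (Acoord \<omega> (S ! i') < Acoord \<omega> (S ! i) \<or> (Acoord \<omega> (S ! i') = Acoord \<omega> (S ! i) \<and> i' < i))}"

text \<open>Y_gamma for gamma = (S, S!k, l), listed in the order \<prec>_gamma.\<close>
definition Ysimp :: "(vertex \<Rightarrow> real) \<Rightarrow> osimplex \<Rightarrow> nat \<Rightarrow> int \<Rightarrow> osimplex" where
  "Ysimp \<omega> S k l =
     (let j = Arank \<omega> S k in
      concat (map (\<lambda>i. let u = S ! i; hi = u @ [acoord \<omega> u + l]; lo = u @ [acoord \<omega> u + l - 1] in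
                        if Arank \<omega> S i < j then [hi]
                        else if Arank \<omega> S i > j then [lo]
                        else [hi, lo]) [0..<length S]))"

definition Ycx :: "(vertex \<Rightarrow> real) \<Rightarrow> int \<Rightarrow> int \<Rightarrow> osimplex set \<Rightarrow> osimplex set" where
  "Ycx \<omega> M1 M2 X = {Ysimp \<omega> S k l | S k l. S \<in> X \<and> k < length S \<and> M1 \<le> l \<and> l < M2}"

definition omega_j :: "nat \<Rightarrow> nat \<Rightarrow> (nat \<Rightarrow> 'a \<Rightarrow> complex) \<Rightarrow> (nat \<Rightarrow> 'a) \<Rightarrow> (nat \<Rightarrow> nat) \<Rightarrow> nat
    \<Rightarrow> vertex \<Rightarrow> real" where
  "omega_j r1 r2 tau eps N j x =
     real (N j) / (2 * pi) * (\<Sum>l\<in>{1..r1+r2-1}. real_of_int (x ! (l - 1)) * Arg (tau (r1 + j) (eps l)))"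

fun Xcx :: "nat \<Rightarrow> nat \<Rightarrow> (nat \<Rightarrow> 'a \<Rightarrow> complex) \<Rightarrow> (nat \<Rightarrow> 'a) \<Rightarrow> (nat \<Rightarrow> nat) \<Rightarrow> nat \<Rightarrow> osimplex set" where
  "Xcx r1 r2 tau eps N 0 = {[[]]}"
| "Xcx r1 r2 tau eps N (Suc m) =
     (if m < r1 + r2 - 1 then Ycx (\<lambda>_. 0) 0 1 (Xcx r1 r2 tau eps N m)
      else (let j = m - (r1 + r2 - 1) + 1 in
            Ycx (omega_j r1 r2 tau eps N j) 0 (int (N j)) (Xcx r1 r2 tau eps N m)))"

definition frakI :: "nat \<Rightarrow> nat \<Rightarrow> (nat \<Rightarrow> 'a \<Rightarrow> complex) \<Rightarrow> (nat \<Rightarrow> 'a) \<Rightarrow> (nat \<Rightarrow> nat) \<Rightarrow> osimplex set" where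
  "frakI r1 r2 tau eps N = Xcx r1 r2 tau eps N (r1 + 2 * r2 - 1)"

definition vpt :: "vertex \<Rightarrow> (nat \<Rightarrow> real)" where
  "vpt v = (\<lambda>l. if l \<in> {1..length v} then real_of_int (v ! (l - 1)) else 0)"

definition vint :: "vertex \<Rightarrow> (nat \<Rightarrow> int)" where
  "vint v = (\<lambda>l. if l \<in> {1..length v} then v ! (l - 1) else 0)"

definition gsimp :: "osimplex \<Rightarrow> (nat \<Rightarrow> real) set" where
  "gsimp S = {p. \<exists>t::nat \<Rightarrow> real. (\<forall>i<length S. t i \<ge> 0) \<and> (\<Sum>i<length S. t i) = 1 \<and>
                  p = (\<lambda>l. \<Sum>i<length S. t i * vpt (S ! i) l)}"

definition frakX :: "nat \<Rightarrow> nat \<Rightarrow> (nat \<Rightarrow> 'a \<Rightarrow> complex) \<Rightarrow> (nat \<Rightarrow> 'a) \<Rightarrow> (nat \<Rightarrow> nat) \<Rightarrow> (nat \<Rightarrow> real) set" where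
  "frakX r1 r2 tau eps N = (\<Union>S\<in>frakI r1 r2 tau eps N. gsimp S)"

definition ftilde :: "nat \<Rightarrow> (nat \<Rightarrow> 'a::field_char_0) \<Rightarrow> ((nat \<Rightarrow> int) \<Rightarrow> 'a) \<Rightarrow> vertex \<Rightarrow> 'a" where
  "ftilde r eps beta v = beta (vint v) * eps_pow r eps (vint v)"

definition admissible_A :: "nat \<Rightarrow> nat \<Rightarrow> (nat \<Rightarrow> 'a::field_char_0 \<Rightarrow> complex) \<Rightarrow> (nat \<Rightarrow> 'a) \<Rightarrow> (nat \<Rightarrow> nat)
    \<Rightarrow> ((nat \<Rightarrow> int) \<Rightarrow> 'a) \<Rightarrow> ((nat \<Rightarrow> real) \<Rightarrow> (nat \<Rightarrow> complex)) \<Rightarrow> bool" where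
  "admissible_A r1 r2 tau eps N beta A \<longleftrightarrow>
     continuous_on (frakX r1 r2 tau eps N) A \<and>
     (\<forall>S\<in>frakI r1 r2 tau eps N. \<forall>t::nat \<Rightarrow> real.
        (\<forall>i<length S. t i \<ge> 0) \<and> (\<Sum>i<length S. t i) = 1 \<longrightarrow>
        A (\<lambda>l. \<Sum>i<length S. t i * vpt (S ! i) l)
          = (\<lambda>c. \<Sum>i<length S. complex_of_real (t i) *
                    emb r1 r2 tau (ftilde (r1 + r2 - 1) eps beta (S ! i)) c))"

definition fmap :: "((nat \<Rightarrow> real) \<Rightarrow> (nat \<Rightarrow> complex)) \<Rightarrow> (nat \<Rightarrow> real) \<Rightarrow> real \<Rightarrow> (nat \<Rightarrow> complex)" where
  "fmap A x y = (\<lambda>c. complex_of_real (exp y) * A x c)"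

definition Hsect :: "real \<Rightarrow> complex set" where
  "Hsect t = {z. \<exists>\<rho>>0. \<exists>\<theta>. -1/4 < \<theta> \<and> \<theta> < 1/4 \<and>
                  z = complex_of_real \<rho> * exp (2 * complex_of_real pi * \<i> * complex_of_real (t + \<theta>))}"

definition Omega :: "nat \<Rightarrow> nat \<Rightarrow> (nat \<Rightarrow> 'a \<Rightarrow> complex) \<Rightarrow> (nat \<Rightarrow> 'a) \<Rightarrow> (nat \<Rightarrow> nat) \<Rightarrow> nat
    \<Rightarrow> (nat \<Rightarrow> real) \<Rightarrow> real" where
  "Omega r1 r2 tau eps N j \<kappa> = \<kappa> (r1 + r2 - 1 + j) +
     real (N j) / (2 * pi) * (\<Sum>l\<in>{1..r1+r2-1}. \<kappa> l * Arg (tau (r1 + j) (eps l)))"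

definition Hcal :: "nat \<Rightarrow> nat \<Rightarrow> (nat \<Rightarrow> nat) \<Rightarrow> (nat \<Rightarrow> real) \<Rightarrow> (nat \<Rightarrow> complex) set" where
  "Hcal r1 r2 N a = {z. (\<forall>i\<in>{1..r1}. z i \<in> \<real> \<and> Re (z i) > 0) \<and>
       (\<forall>j\<in>{1..r2}. z (r1 + j) \<in> Hsect ((a j + 1/2) / real (N j))) \<and>
       (\<forall>i. i \<notin> {1..r1+r2} \<longrightarrow> z i = 0)}"

definition posCstar :: "nat \<Rightarrow> nat \<Rightarrow> (nat \<Rightarrow> complex) set" where
  "posCstar r1 r2 = {z. (\<forall>i\<in>{1..r1}. z i \<in> \<real> \<and> Re (z i) > 0) \<and>
       (\<forall>j\<in>{1..r2}. z (r1 + j) \<noteq> 0) \<and> (\<forall>i. i \<notin> {1..r1+r2} \<longrightarrow> z i = 0)}"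

end

theory Submission
  imports Defs
begin

text \<open>
  On a simplex of the complex, \<open>f\<close> is \<open>e\<^sup>y\<close> times a convex combination of the vertex values
  \<open>f\<^sup>~(v)\<close>. At the \<open>j\<close>-th complex place the twister puts the argument of \<open>f\<^sup>~(v)\<close> at
  \<open>2\<pi>(\<Omega>\<^sub>j(v) + t)/N\<^sub>j\<close> with \<open>|t|\<close> small, and \<open>\<Omega>\<^sub>j\<close> varies by at most 1 over a simplex, because
  each step \<open>Y(X, \<omega>, \<cdot>)\<close> of the construction only joins lifted vertices whose \<open>\<omega>\<close>-heights lie in
  a unit interval. So all vertex values lie in one open half plane, a convex cone; this gives (i),
  and normalising the weights gives (ii).

  For (iii), \<open>f\<^sup>~(v + \<lambda>) = \<epsilon>(\<lambda>) f\<^sup>~(v)\<close> by periodicity of \<open>\<beta>\<close>, so it suffices that \<open>x + \<lambda>\<close> has the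
  same barycentric weights with respect to the simplex of the complex containing it and with respect
  to the translate of the simplex containing \<open>x\<close>. Both vertex sets are windows (the unit-interval
  property at every level), a translation invariant notion, and barycentric weights on windows are
  unique: by induction on the dimension the projected weights agree, and within each fibre the
  interval property forbids mass of one weight function to lie strictly above mass of the other,
  except over the base vertex of the top level, where the two linear conditions of total mass and
  last coordinate decide.
\<close>

section \<open>Weights on finite sets\<close>

lemma sum_weighted_le_bound:
  fixes w f :: "'a \<Rightarrow> real"
  assumes fin: "finite F" and nonneg: "\<forall>x\<in>F. 0 \<le> w x" and bound: "\<forall>x\<in>F. 0 < w x \<longrightarrow> f x \<le> c"
  shows "(\<Sum>x\<in>F. w x * f x) \<le> c * sum w F"
    and "x0 \<in> F \<Longrightarrow> 0 < w x0 \<Longrightarrow> f x0 < c \<Longrightarrow> (\<Sum>x\<in>F. w x * f x) < c * sum w F"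
proof -
  have le: "\<forall>x\<in>F. w x * f x \<le> w x * c"
  proof
    fix x assume x: "x \<in> F"
    show "w x * f x \<le> w x * c"
    proof (cases "w x = 0")
      case False
      then show ?thesis using nonneg bound x by (intro mult_left_mono) auto
    qed simp
  qed
  have c: "c * sum w F = (\<Sum>x\<in>F. w x * c)"
    by (simp add: sum_distrib_left mult.commute)
  show "(\<Sum>x\<in>F. w x * f x) \<le> c * sum w F"
    unfolding c by (rule sum_mono) (use le in blast)
  show "(\<Sum>x\<in>F. w x * f x) < c * sum w F" if "x0 \<in> F" "0 < w x0" "f x0 < c"
  proof -
    have "w x0 * f x0 < w x0 * c" using that by simp
    then show ?thesis unfolding c using le that(1) by (intro sum_strict_mono_ex1[OF fin]) blast+
  qed
qed

lemma sum_weighted_ge_bound: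
  fixes w f :: "'a \<Rightarrow> real"
  assumes "finite F" "\<forall>x\<in>F. 0 \<le> w x" "\<forall>x\<in>F. 0 < w x \<longrightarrow> c \<le> f x"
  shows "c * sum w F \<le> (\<Sum>x\<in>F. w x * f x)"
    and "x0 \<in> F \<Longrightarrow> 0 < w x0 \<Longrightarrow> c < f x0 \<Longrightarrow> c * sum w F < (\<Sum>x\<in>F. w x * f x)"
  using sum_weighted_le_bound[of F w "\<lambda>x. - f x" "- c"] assms
  by (simp_all add: sum_negf)

definition weight_exceeds :: "('a \<Rightarrow> real) \<Rightarrow> 'a set \<Rightarrow> ('a \<Rightarrow> real) \<Rightarrow> ('a \<Rightarrow> real) \<Rightarrow> bool" where
  "weight_exceeds f F w w' \<longleftrightarrow> (\<exists>x\<in>F. \<exists>x'\<in>F. 0 < w x \<and> 0 < w' x' \<and> f x' < f x)"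

lemma sum_nonneg_pos_witness:
  fixes w :: "'a \<Rightarrow> real"
  assumes "finite F" "\<forall>x\<in>F. 0 \<le> w x" "sum w F \<noteq> 0"
  obtains x where "x \<in> F" "0 < w x"
proof -
  have "\<not> (\<forall>x\<in>F. w x = 0)" using assms(3) sum.neutral by blast
  then show ?thesis using that assms(2) by (auto simp: less_eq_real_def)
qed

lemma weights_eq_if_not_exceeds:
  fixes w w' f :: "'a \<Rightarrow> real"
  assumes fin: "finite F" and inj: "inj_on f F"
    and nonneg: "\<forall>x\<in>F. 0 \<le> w x" "\<forall>x\<in>F. 0 \<le> w' x"
    and mass: "sum w F = sum w' F"
    and up: "\<not> weight_exceeds f F w w'" and down: "\<not> weight_exceeds f F w' w"
  shows "\<forall>x\<in>F. w x = w' x"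
proof (cases "sum w F = 0")
  case True
  then show ?thesis
    using mass sum_nonneg_eq_0_iff[OF fin nonneg(1)[rule_format]] sum_nonneg_eq_0_iff[OF fin nonneg(2)[rule_format]] by simp
next
  case False
  obtain x0 where x0: "x0 \<in> F" "0 < w x0" using sum_nonneg_pos_witness[OF fin nonneg(1) False] .
  obtain x1 where x1: "x1 \<in> F" "0 < w' x1"
    using sum_nonneg_pos_witness[OF fin nonneg(2)] False mass by metis
  have same: "x = x'" if "x \<in> F" "x' \<in> F" "0 < w x" "0 < w' x'" for x x'
  proof -
    have "\<not> f x' < f x" "\<not> f x < f x'"
      using up down that unfolding weight_exceeds_def by blast+
    then have "f x = f x'" by linarith
    then show ?thesis using inj that(1,2) by (auto dest: inj_onD)
  qed
  have "x0 = x1" using same x0 x1 by blast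
  have zero: "w x = 0 \<and> w' x = 0" if "x \<in> F - {x0}" for x
  proof -
    have "\<not> 0 < w x" using same[of x x1] x1 that \<open>x0 = x1\<close> by auto
    moreover have "\<not> 0 < w' x" using same[of x0 x] x0 that by auto
    ultimately show ?thesis using nonneg that by force
  qed
  have "sum w F = w x0" "sum w' F = w' x0"
    using sum.remove[OF fin x0(1), of w] sum.remove[OF fin x0(1), of w'] zero by simp_all
  show ?thesis
  proof
    fix x assume "x \<in> F"
    then show "w x = w' x"
      using zero[of x] mass \<open>sum w F = w x0\<close> \<open>sum w' F = w' x0\<close> by (cases "x = x0") auto
  qed
qed

lemma moment_le_if_not_exceeds:
  fixes w w' f :: "'a \<Rightarrow> real"
  assumes fin: "finite F" and nonneg: "\<forall>x\<in>F. 0 \<le> w x" "\<forall>x\<in>F. 0 \<le> w' x"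
    and mass: "sum w F = sum w' F" and up: "\<not> weight_exceeds f F w w'"
  shows "(\<Sum>x\<in>F. w x * f x) \<le> (\<Sum>x\<in>F. w' x * f x)"
    and "weight_exceeds f F w' w \<Longrightarrow> (\<Sum>x\<in>F. w x * f x) < (\<Sum>x\<in>F. w' x * f x)"
proof -
  obtain c where below: "\<forall>x\<in>F. 0 < w x \<longrightarrow> f x \<le> c" and above: "\<forall>x\<in>F. 0 < w' x \<longrightarrow> c \<le> f x"
  proof (cases "sum w F = 0")
    case True
    then have "\<forall>x\<in>F. w x = 0" "\<forall>x\<in>F. w' x = 0"
      using mass sum_nonneg_eq_0_iff[OF fin nonneg(1)[rule_format]] sum_nonneg_eq_0_iff[OF fin nonneg(2)[rule_format]] by simp_all
    then show ?thesis using that[of 0] by simp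
  next
    case False
    let ?P = "{x\<in>F. 0 < w x}"
    obtain x0 where "x0 \<in> F" "0 < w x0" using sum_nonneg_pos_witness[OF fin nonneg(1) False] .
    then have P: "finite (f ` ?P)" "f ` ?P \<noteq> {}" using fin by auto
    obtain m where m: "m \<in> F" "0 < w m" "f m = Max (f ` ?P)"
      using Max_in[OF P] by auto
    have "f x \<le> f m" if "x \<in> F" "0 < w x" for x
      unfolding m(3) using P(1) that by (intro Max_ge) auto
    moreover have "f m \<le> f x" if "x \<in> F" "0 < w' x" for x
    proof -
      have "\<not> f x < f m" using up m that unfolding weight_exceeds_def by blast
      then show ?thesis by linarith
    qed
    ultimately show ?thesis using that[of "f m"] by blast
  qed
  note le = sum_weighted_le_bound[OF fin nonneg(1) below]
    and ge = sum_weighted_ge_bound[OF fin nonneg(2) above]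
  show "(\<Sum>x\<in>F. w x * f x) \<le> (\<Sum>x\<in>F. w' x * f x)"
    using le(1) ge(1) mass by simp
  show "(\<Sum>x\<in>F. w x * f x) < (\<Sum>x\<in>F. w' x * f x)" if "weight_exceeds f F w' w"
  proof -
    from that obtain x x' where x: "x \<in> F" "x' \<in> F" "0 < w' x" "0 < w x'" "f x' < f x"
      unfolding weight_exceeds_def by blast
    then consider "f x' < c" | "c < f x" by linarith
    then show ?thesis
    proof cases
      case 1 then show ?thesis using le(2)[OF x(2,4)] ge(1) mass by simp
    next
      case 2 then show ?thesis using ge(2)[OF x(1,3)] le(1) mass by simp
    qed
  qed
qed

lemma two_point_weights_eq:
  fixes w w' f :: "'a \<Rightarrow> real"
  assumes fin: "finite F" and pq: "p \<in> F" "q \<in> F" "f p \<noteq> f q"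
    and outside: "\<forall>x\<in>F - {p, q}. w x = 0 \<and> w' x = 0"
    and mass: "sum w F = sum w' F" and moment: "(\<Sum>x\<in>F. w x * f x) = (\<Sum>x\<in>F. w' x * f x)"
  shows "\<forall>x\<in>F. w x = w' x"
proof -
  have "p \<noteq> q" using pq by auto
  have two: "(\<Sum>x\<in>F. g x) = g p + g q" if "\<forall>x\<in>F - {p, q}. g x = 0" for g :: "'a \<Rightarrow> real"
  proof -
    have "(\<Sum>x\<in>F. g x) = (\<Sum>x\<in>{p, q}. g x)"
      using that pq fin by (intro sum.mono_neutral_right) auto
    then show ?thesis using \<open>p \<noteq> q\<close> by simp
  qed
  have m: "w p + w q = w' p + w' q" and m1: "w p * f p + w q * f q = w' p * f p + w' q * f q"
    using mass moment two[of w] two[of w'] two[of "\<lambda>x. w x * f x"] two[of "\<lambda>x. w' x * f x"] outside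
    by simp_all
  have "(w q - w' q) * (f q - f p) =
      (w p * f p + w q * f q - (w' p * f p + w' q * f q)) - (w p + w q - (w' p + w' q)) * f p"
    by (simp add: algebra_simps)
  then have "(w q - w' q) * (f q - f p) = 0" using m m1 by simp
  then have "w q = w' q" using pq(3) by simp
  then have "w p = w' p" using m by simp
  show ?thesis
  proof
    fix x assume "x \<in> F"
    then show "w x = w' x"
      using outside \<open>w q = w' q\<close> \<open>w p = w' p\<close> by (cases "x = p \<or> x = q") auto
  qed
qed

lemma weights_eq_if_fibres_not_exceed:
  fixes w w' f :: "'a \<Rightarrow> real" and \<pi> :: "'a \<Rightarrow> 'b"
  assumes fin: "finite W" and inj: "\<forall>u. inj_on f {x\<in>W. \<pi> x = u}"
    and nonneg: "\<forall>x\<in>W. 0 \<le> w x" "\<forall>x\<in>W. 0 \<le> w' x"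
    and mass: "\<forall>u. sum w {x\<in>W. \<pi> x = u} = sum w' {x\<in>W. \<pi> x = u}"
    and moment: "(\<Sum>x\<in>W. w x * f x) = (\<Sum>x\<in>W. w' x * f x)"
    and up: "\<forall>u. \<not> weight_exceeds f {x\<in>W. \<pi> x = u} w w'"
  shows "\<forall>x\<in>W. w x = w' x"
proof -
  let ?fib = "\<lambda>u. {x\<in>W. \<pi> x = u}"
  let ?M = "\<lambda>w u. \<Sum>x\<in>?fib u. w x * f x"
  have finF: "finite (?fib u)" for u using fin by simp
  have nonnegF: "\<forall>x\<in>?fib u. 0 \<le> w x" "\<forall>x\<in>?fib u. 0 \<le> w' x" for u using nonneg by auto
  note le = moment_le_if_not_exceeds[OF finF nonnegF mass[rule_format] up[rule_format]]
  have down: "\<not> weight_exceeds f (?fib u) w' w" for u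
  proof
    assume "weight_exceeds f (?fib u) w' w"
    then have "u \<in> \<pi> ` W" unfolding weight_exceeds_def by blast
    then have "(\<Sum>u\<in>\<pi> ` W. ?M w u) < (\<Sum>u\<in>\<pi> ` W. ?M w' u)"
      using le \<open>weight_exceeds f (?fib u) w' w\<close> by (intro sum_strict_mono_ex1) (use fin in auto)
    moreover have "(\<Sum>x\<in>W. g x) = (\<Sum>u\<in>\<pi> ` W. \<Sum>x\<in>?fib u. g x)" for g :: "'a \<Rightarrow> real"
      by (rule sum.group[OF fin finite_imageI[OF fin] order_refl, symmetric])
    ultimately show False using moment by simp
  qed
  show ?thesis
    using weights_eq_if_not_exceeds[OF finF inj[rule_format] nonnegF mass[rule_format] up[rule_format] down]
    by blast
qed

lemma weights_eq_if_fibres_not_exceed_but_one: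
  fixes w w' f :: "'a \<Rightarrow> real" and \<pi> :: "'a \<Rightarrow> 'b"
  assumes fin: "finite W" and inj: "\<forall>u. inj_on f {x\<in>W. \<pi> x = u}"
    and nonneg: "\<forall>x\<in>W. 0 \<le> w x" "\<forall>x\<in>W. 0 \<le> w' x"
    and mass: "\<forall>u. sum w {x\<in>W. \<pi> x = u} = sum w' {x\<in>W. \<pi> x = u}"
    and moment: "(\<Sum>x\<in>W. w x * f x) = (\<Sum>x\<in>W. w' x * f x)"
    and others: "\<forall>u. u \<noteq> u0 \<longrightarrow> \<not> weight_exceeds f {x\<in>W. \<pi> x = u} w w' \<and>
                               \<not> weight_exceeds f {x\<in>W. \<pi> x = u} w' w"
    and pq: "p \<in> W" "q \<in> W" "\<pi> p = u0" "\<pi> q = u0" "f p \<noteq> f q"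
    and two: "\<forall>x\<in>W. \<pi> x = u0 \<and> x \<noteq> p \<and> x \<noteq> q \<longrightarrow> w x = 0 \<and> w' x = 0"
  shows "\<forall>x\<in>W. w x = w' x"
proof -
  let ?fib = "\<lambda>u. {x\<in>W. \<pi> x = u}"
  let ?M = "\<lambda>w u. \<Sum>x\<in>?fib u. w x * f x"
  have finF: "finite (?fib u)" for u using fin by simp
  have nonnegF: "\<forall>x\<in>?fib u. 0 \<le> w x" "\<forall>x\<in>?fib u. 0 \<le> w' x" for u using nonneg by auto
  have off: "w x = w' x" if "x \<in> W" "\<pi> x \<noteq> u0" for x
    using weights_eq_if_not_exceeds[OF finF inj[rule_format] nonnegF mass[rule_format]] others that
    by blast
  have u0: "u0 \<in> \<pi> ` W" using pq by blast
  have "(\<Sum>x\<in>W. g x) = (\<Sum>u\<in>\<pi> ` W. \<Sum>x\<in>?fib u. g x)" for g :: "'a \<Rightarrow> real"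
    by (rule sum.group[OF fin finite_imageI[OF fin] order_refl, symmetric])
  then have "(\<Sum>u\<in>\<pi> ` W. ?M w u) = (\<Sum>u\<in>\<pi> ` W. ?M w' u)"
    using moment by metis
  moreover have "(\<Sum>u\<in>\<pi> ` W - {u0}. ?M w u) = (\<Sum>u\<in>\<pi> ` W - {u0}. ?M w' u)"
    using off by (intro sum.cong) auto
  ultimately have "?M w u0 = ?M w' u0"
    using sum.remove[OF finite_imageI[OF fin] u0, of "?M w"] sum.remove[OF finite_imageI[OF fin] u0, of "?M w'"]
    by linarith
  then have "\<forall>x\<in>?fib u0. w x = w' x"
    using two pq mass by (intro two_point_weights_eq[OF finF, where p = p and q = q]) auto
  then show ?thesis using off by blast
qed

lemma fun_eq_if_eq_on_supports:
  assumes "\<forall>x. w x \<noteq> 0 \<longrightarrow> x \<in> W" "\<forall>x. w' x \<noteq> 0 \<longrightarrow> x \<in> W" "\<forall>x\<in>W. w x = w' x"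
  shows "w = w'"
proof
  fix x show "w x = w' x"
  proof (cases "x \<in> W")
    case False
    then have "w x = 0" "w' x = 0" using assms(1,2) by blast+
    then show ?thesis by simp
  qed (use assms(3) in blast)
qed

lemma sum_fibre_mono_neutral:
  assumes "finite W" "V \<subseteq> W" "\<forall>x. w x \<noteq> 0 \<longrightarrow> x \<in> V"
  shows "sum w {x\<in>W. \<pi> x = u} = sum w {x\<in>V. \<pi> x = u}"
  using assms by (intro sum.mono_neutral_right) auto

lemma convex_comb_pos:
  fixes t f :: "nat \<Rightarrow> real"
  assumes "\<forall>i<n. 0 \<le> t i" "(\<Sum>i<n. t i) = 1" "\<forall>i<n. 0 < f i"
  shows "0 < (\<Sum>i<n. t i * f i)"
proof -
  obtain i0 where "i0 < n" "t i0 \<noteq> 0" using assms(2) by (metis lessThan_iff sum.neutral zero_neq_one)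
  then show ?thesis using assms by (intro sum_pos2[of _ i0]) (auto simp: less_eq_real_def)
qed

lemma convex_comb_bounds:
  fixes t f :: "nat \<Rightarrow> real"
  assumes t: "\<forall>i<n. 0 \<le> t i" "(\<Sum>i<n. t i) = 1" and f: "\<forall>i<n. c \<le> f i \<and> f i \<le> d"
  shows "c \<le> (\<Sum>i<n. t i * f i) \<and> (\<Sum>i<n. t i * f i) \<le> d"
proof
  have "c = (\<Sum>i<n. t i * c)" "d = (\<Sum>i<n. t i * d)" using t(2) by (simp_all add: sum_distrib_right[symmetric])
  moreover have "(\<Sum>i<n. t i * c) \<le> (\<Sum>i<n. t i * f i)" "(\<Sum>i<n. t i * f i) \<le> (\<Sum>i<n. t i * d)"
    using t f by (auto intro!: sum_mono mult_left_mono)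
  ultimately show "c \<le> (\<Sum>i<n. t i * f i)" "(\<Sum>i<n. t i * f i) \<le> d" by simp_all
qed

lemma sum_unit_weight:
  fixes f :: "nat \<Rightarrow> 'a::real_algebra_1"
  assumes "i < n"
  shows "(\<Sum>k<n. of_real (if k = i then 1 else 0) * f k) = f i"
  using assms by (subst sum.remove[of _ i]) auto

section \<open>Vertices: translations and the height order\<close>

lemma lexordp_append_same_length:
  fixes u u' :: "'a::linorder list"
  assumes "length u = length u'"
  shows "ord_class.lexordp (u @ a) (u' @ b) \<longleftrightarrow> ord_class.lexordp u u' \<or> (u = u' \<and> ord_class.lexordp a b)"
  using assms
proof (induct u arbitrary: u')
  case (Cons x u)
  then obtain y v where "u' = y # v" by (cases u') auto
  with Cons show ?case by auto
qed simp

lemma lexordp_map2_add_right: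
  fixes xs ys zs :: "'a::linordered_ab_group_add list"
  assumes "length xs = length zs" "length ys = length zs"
  shows "ord_class.lexordp (map2 (+) xs zs) (map2 (+) ys zs) \<longleftrightarrow> ord_class.lexordp xs ys"
  using assms
proof (induct zs arbitrary: xs ys)
  case (Cons z zs)
  then obtain x xs' y ys' where "xs = x # xs'" "ys = y # ys'" by (cases xs; cases ys) auto
  with Cons show ?case by auto
qed simp

text \<open>Vertices are lists whose entry \<open>i\<close> is the coordinate \<open>x[i+1]\<close>; hence the shift in \<open>lam (Suc i)\<close>.\<close>

definition translate :: "(nat \<Rightarrow> int) \<Rightarrow> vertex \<Rightarrow> vertex" where
  "translate lam u = map (\<lambda>i. u ! i + lam (Suc i)) [0..<length u]"

lemma length_translate [simp]: "length (translate lam u) = length u"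
  by (simp add: translate_def)

lemma nth_translate [simp]: "i < length u \<Longrightarrow> translate lam u ! i = u ! i + lam (Suc i)"
  by (simp add: translate_def)

lemma translate_Nil [simp]: "translate lam [] = []"
  by (simp add: translate_def)

lemma translate_snoc: "translate lam (u @ [z]) = translate lam u @ [z + lam (Suc (length u))]"
  by (rule nth_equalityI) (auto simp: nth_append less_Suc_eq)

lemma butlast_translate: "butlast (translate lam v) = translate lam (butlast v)"
  by (cases v rule: rev_cases) (simp_all add: translate_snoc)

lemma last_translate: "v \<noteq> [] \<Longrightarrow> last (translate lam v) = last v + lam (length v)"
  by (cases v rule: rev_cases) (simp_all add: translate_snoc)

lemma translate_inj:
  assumes "length x = length y" "translate lam x = translate lam y"
  shows "x = y"
proof (rule nth_equalityI)
  fix i assume "i < length x"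
  then show "x ! i = y ! i"
    using assms nth_translate[of i x lam] nth_translate[of i y lam] by simp
qed (fact assms(1))

lemma lexordp_translate:
  assumes "length x = length y"
  shows "ord_class.lexordp (translate lam x) (translate lam y) \<longleftrightarrow> ord_class.lexordp x y"
proof -
  have "translate lam v = map2 (+) v (map (\<lambda>i. lam (Suc i)) [0..<length v])" for v
    by (rule nth_equalityI) simp_all
  then show ?thesis using assms by (simp add: lexordp_map2_add_right)
qed

lemma vpt_vint: "vpt v = (\<lambda>l. real_of_int (vint v l))"
  unfolding vpt_def vint_def by auto

lemma vint_int_points: "vint v \<in> int_points (length v)"
  unfolding vint_def int_points_def by auto

lemma vint_translate:
  assumes "lam \<in> int_points (length u)"
  shows "vint (translate lam u) = (\<lambda>l. vint u l + lam l)"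
proof
  fix l
  show "vint (translate lam u) l = vint u l + lam l"
  proof (cases "l \<in> {1..length u}")
    case False
    then have "l = 0 \<or> length u < l" by auto
    then have "lam l = 0" using assms unfolding int_points_def by blast
    then show ?thesis using False unfolding vint_def by auto
  qed (auto simp: vint_def)
qed

lemma vpt_translate:
  "lam \<in> int_points (length u) \<Longrightarrow> vpt (translate lam u) = (\<lambda>l. vpt u l + real_of_int (lam l))"
  by (simp add: vpt_vint vint_translate)

lemma vpt_butlast: "length v = Suc m \<Longrightarrow> vpt (butlast v) l = (if l \<le> m then vpt v l else 0)"
  unfolding vpt_def by (auto simp: nth_butlast)

lemma vpt_last: "length v = Suc m \<Longrightarrow> vpt v (Suc m) = real_of_int (last v)"
  unfolding vpt_def by (cases "v = []") (auto simp: last_conv_nth)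

text \<open>
  A lifted vertex \<open>u \<times> (a(u) + \<ell>)\<close> of \<open>Y(X, \<omega>, \<cdot>)\<close> has height \<open>A(u) + \<ell>\<close>; the order
  \<open>vertex_le\<close> compares heights and breaks ties by the (reversed) lexicographic order of the base,
  which is the order \<open>\<prec>\<^sub>\<alpha>\<close> in which the construction lists vertices.
\<close>

definition height :: "(vertex \<Rightarrow> real) \<Rightarrow> vertex \<Rightarrow> real" where
  "height \<omega> v = real_of_int (last v) + \<omega> (butlast v)"

definition vertex_le :: "(vertex \<Rightarrow> real) \<Rightarrow> vertex \<Rightarrow> vertex \<Rightarrow> bool" where
  "vertex_le \<omega> x y \<longleftrightarrow> height \<omega> x < height \<omega> y \<or>
     (height \<omega> x = height \<omega> y \<and> (butlast x = butlast y \<or> ord_class.lexordp (butlast y) (butlast x)))"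

definition incr_last :: "vertex \<Rightarrow> vertex" where
  "incr_last v = butlast v @ [last v + 1]"

lemma incr_last_simps [simp]:
  "butlast (incr_last v) = butlast v" "last (incr_last v) = last v + 1" "incr_last v \<noteq> []"
  "length (incr_last v) = Suc (length (butlast v))"
  by (simp_all add: incr_last_def)

lemma incr_last_inj: "x \<noteq> [] \<Longrightarrow> y \<noteq> [] \<Longrightarrow> incr_last x = incr_last y \<Longrightarrow> x = y"
  by (metis append_butlast_last_id incr_last_simps(1,2) add_right_cancel)

lemma incr_last_translate: "v \<noteq> [] \<Longrightarrow> incr_last (translate lam v) = translate lam (incr_last v)"
  by (cases v rule: rev_cases) (simp_all add: incr_last_def translate_snoc)

lemma vertex_le_refl: "vertex_le \<omega> x x"
  by (simp add: vertex_le_def)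

lemma height_incr_last: "height \<omega> (incr_last v) = height \<omega> v + 1"
  by (simp add: height_def)

lemma height_mono: "vertex_le \<omega> x y \<Longrightarrow> height \<omega> x \<le> height \<omega> y"
  unfolding vertex_le_def by auto

lemma vertex_le_trans: "vertex_le \<omega> x y \<Longrightarrow> vertex_le \<omega> y z \<Longrightarrow> vertex_le \<omega> x z"
  unfolding vertex_le_def by (smt (verit) lexordp_trans)

lemma vertex_le_antisym:
  assumes "x \<noteq> []" "y \<noteq> []" "vertex_le \<omega> x y" "vertex_le \<omega> y x"
  shows "x = y"
proof -
  have "height \<omega> x = height \<omega> y" "butlast x = butlast y"
    using assms(3,4) lexordp_trans lexordp_irreflexive' unfolding vertex_le_def by fastforce+
  then show ?thesis
    using assms(1,2) by (metis append_butlast_last_id height_def add_right_cancel of_int_eq_iff)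
qed

lemma vertex_le_linear: "vertex_le \<omega> x y \<or> vertex_le \<omega> y x"
  using lexordp_linear[of "butlast x" "butlast y"] unfolding vertex_le_def by auto

lemma vertex_le_incr_last: "vertex_le \<omega> x y \<Longrightarrow> vertex_le \<omega> (incr_last x) (incr_last y)"
  unfolding vertex_le_def height_incr_last by simp

lemma vertex_le_incr_last_fibre:
  "butlast x = butlast y \<Longrightarrow> last x < last y \<Longrightarrow> vertex_le \<omega> (incr_last x) y"
  unfolding vertex_le_def height_def by auto

lemma last_le_if_vertex_le_fibre: "butlast x = butlast y \<Longrightarrow> vertex_le \<omega> x y \<Longrightarrow> last x \<le> last y"
  unfolding vertex_le_def height_def by auto

lemma vertex_le_translate:
  assumes shift: "\<forall>u. length u = m \<longrightarrow> \<omega> (translate lam u) = \<omega> u + c"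
    and len: "length x = Suc m" "length y = Suc m"
  shows "vertex_le \<omega> (translate lam x) (translate lam y) \<longleftrightarrow> vertex_le \<omega> x y"
proof -
  have height: "height \<omega> (translate lam v) = height \<omega> v + real_of_int (lam (Suc m)) + c"
    if "length v = Suc m" for v
  proof -
    have "v \<noteq> []" using that by auto
    then show ?thesis
      using that shift unfolding height_def by (simp add: butlast_translate last_translate)
  qed
  have "butlast (translate lam x) = butlast (translate lam y) \<longleftrightarrow> butlast x = butlast y"
    using translate_inj[of "butlast x" "butlast y" lam] len by (auto simp: butlast_translate)
  moreover have "ord_class.lexordp (butlast (translate lam y)) (butlast (translate lam x)) \<longleftrightarrow>
      ord_class.lexordp (butlast y) (butlast x)"
    using lexordp_translate[of "butlast y" "butlast x" lam] len by (simp add: butlast_translate)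
  ultimately show ?thesis unfolding vertex_le_def height[OF len(1)] height[OF len(2)] by simp
qed

section \<open>Windows\<close>

definition vertex_interval :: "(vertex \<Rightarrow> real) \<Rightarrow> vertex \<Rightarrow> vertex set" where
  "vertex_interval \<omega> b = {v. vertex_le \<omega> b v \<and> vertex_le \<omega> v (incr_last b)}"

text \<open>
  The only property of the simplices of the complex used for (iii): their vertex sets are windows
  (lemma \<open>Xcx_window\<close> below), and unlike membership in the complex this is preserved by
  translations.
\<close>

fun window :: "(nat \<Rightarrow> vertex \<Rightarrow> real) \<Rightarrow> nat \<Rightarrow> vertex set \<Rightarrow> bool" where
  "window \<omega> 0 V \<longleftrightarrow> V = {[]}"
| "window \<omega> (Suc m) V \<longleftrightarrow> finite V \<and>
     (\<exists>B. window \<omega> m B \<and> (\<forall>v\<in>V. length v = Suc m \<and> butlast v \<in> B)) \<and>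
     (\<exists>b\<in>V. V \<subseteq> vertex_interval (\<omega> m) b)"

lemma window_finite: "window \<omega> m V \<Longrightarrow> finite V"
  by (cases m) auto

lemma window_height_bounds:
  "window \<omega> m V \<Longrightarrow> s < m \<Longrightarrow>
     \<exists>c. \<forall>v\<in>V. c \<le> height (\<omega> s) (take (Suc s) v) \<and> height (\<omega> s) (take (Suc s) v) \<le> c + 1"
proof (induct m arbitrary: V)
  case (Suc m)
  from Suc(2) obtain B b where B: "window \<omega> m B" "\<forall>v\<in>V. length v = Suc m \<and> butlast v \<in> B"
    and b: "b \<in> V" "V \<subseteq> vertex_interval (\<omega> m) b" by auto
  show ?case
  proof (cases "s = m")
    case True
    have "height (\<omega> m) b \<le> height (\<omega> m) v \<and> height (\<omega> m) v \<le> height (\<omega> m) b + 1" if "v \<in> V" for v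
      using b that height_mono height_incr_last unfolding vertex_interval_def by (metis subsetD mem_Collect_eq)
    with B(2) True show ?thesis by auto
  next
    case False
    with Suc.prems obtain c where
      "\<forall>u\<in>B. c \<le> height (\<omega> s) (take (Suc s) u) \<and> height (\<omega> s) (take (Suc s) u) \<le> c + 1"
      using Suc.hyps[OF B(1)] by fastforce
    moreover have "take (Suc s) v = take (Suc s) (butlast v)" if "v \<in> V" for v
      using B(2) that False Suc.prems by (simp add: butlast_conv_take min_def)
    ultimately show ?thesis using B(2) by auto
  qed
qed simp

lemma window_translate:
  "window \<omega> m V \<Longrightarrow> (\<forall>s<m. \<exists>c. \<forall>u. length u = s \<longrightarrow> \<omega> s (translate lam u) = \<omega> s u + c) \<Longrightarrow>
     window \<omega> m (translate lam ` V)"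
proof (induct m arbitrary: V)
  case (Suc m)
  from Suc.prems(1) obtain B b where fin: "finite V"
    and B: "window \<omega> m B" "\<forall>v\<in>V. length v = Suc m \<and> butlast v \<in> B"
    and b: "b \<in> V" "V \<subseteq> vertex_interval (\<omega> m) b" by auto
  obtain c where c: "\<forall>u. length u = m \<longrightarrow> \<omega> m (translate lam u) = \<omega> m u + c"
    using Suc.prems(2) by blast
  have "b \<noteq> []" "length (incr_last b) = Suc m" using B b by auto
  then have "translate lam ` V \<subseteq> vertex_interval (\<omega> m) (translate lam b)"
    using b B vertex_le_translate[OF c] unfolding vertex_interval_def
    by (auto simp: incr_last_translate)
  moreover have "\<forall>v\<in>translate lam ` V. length v = Suc m \<and> butlast v \<in> translate lam ` B"
    using B(2) by (auto simp: butlast_translate)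
  ultimately show ?case using fin b(1) Suc.hyps[OF B(1)] Suc.prems(2) by auto
qed simp

lemma vertex_interval_fibre:
  assumes "v \<in> vertex_interval \<omega> b" "butlast v = butlast b" "v \<noteq> []" "b \<noteq> []"
  shows "v = b \<or> v = incr_last b"
proof -
  have "last b \<le> last v" "last v \<le> last b + 1"
    using assms(1,2) last_le_if_vertex_le_fibre[of b v \<omega>] last_le_if_vertex_le_fibre[of v "incr_last b" \<omega>]
    unfolding vertex_interval_def by auto
  then have "last v = last b \<or> last v = last b + 1" by linarith
  then show ?thesis
    using assms(2-4) by (metis append_butlast_last_id incr_last_def)
qed

lemma vertex_interval_fibre_descent:
  assumes l: "l \<in> vertex_interval \<omega> b" and l': "l' \<in> vertex_interval \<omega> b'"
    and bb': "vertex_le \<omega> b b'" and fibre: "butlast l = butlast l'" "last l' < last l"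
    and ne: "b \<noteq> []" "b' \<noteq> []" "l \<noteq> []"
  shows "b = b' \<and> l = incr_last b"
proof -
  have "vertex_le \<omega> (incr_last b') l"
    using vertex_le_incr_last[of \<omega> b' l'] vertex_le_incr_last_fibre[of l' l \<omega>] l' fibre
      vertex_le_trans unfolding vertex_interval_def by auto
  then have up: "vertex_le \<omega> (incr_last b') (incr_last b)"
    using l vertex_le_trans unfolding vertex_interval_def by blast
  then have "incr_last b = incr_last b'"
    using vertex_le_antisym[OF _ _ vertex_le_incr_last[OF bb']] by simp
  then have "b = b'" using incr_last_inj ne by blast
  moreover have "l = incr_last b"
    using vertex_le_antisym[OF ne(3) _ _ \<open>vertex_le \<omega> (incr_last b') l\<close>] l \<open>b = b'\<close>
    unfolding vertex_interval_def by simp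
  ultimately show ?thesis ..
qed

section \<open>Uniqueness of barycentric weights on windows\<close>

definition bary_weights :: "vertex set \<Rightarrow> (vertex \<Rightarrow> real) \<Rightarrow> (nat \<Rightarrow> real) \<Rightarrow> bool" where
  "bary_weights V w p \<longleftrightarrow> (\<forall>v. w v \<noteq> 0 \<longrightarrow> v \<in> V) \<and> (\<forall>v. 0 \<le> w v) \<and> sum w V = 1 \<and>
     p = (\<lambda>l. \<Sum>v\<in>V. w v * vpt v l)"

lemma bary_weights_butlast:
  assumes w: "bary_weights V w p" and fin: "finite V" "finite B"
    and VB: "\<forall>v\<in>V. length v = Suc m \<and> butlast v \<in> B"
  shows "bary_weights B (\<lambda>u. sum w {v\<in>V. butlast v = u}) (\<lambda>l. if l \<le> m then p l else 0)"
proof -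
  have group: "(\<Sum>u\<in>B. sum h {v\<in>V. butlast v = u}) = sum h V" for h :: "vertex \<Rightarrow> real"
    using sum.group[OF fin] VB by blast
  have "sum w {v\<in>V. butlast v = u} = 0" if "u \<notin> B" for u
    using VB that by (metis (mono_tags, lifting) empty_Collect_eq sum.empty)
  moreover have "(\<Sum>u\<in>B. sum w {v\<in>V. butlast v = u} * vpt u l) = (if l \<le> m then p l else 0)" for l
  proof -
    have "(\<Sum>u\<in>B. sum w {v\<in>V. butlast v = u} * vpt u l) =
        (\<Sum>u\<in>B. \<Sum>v\<in>{v\<in>V. butlast v = u}. w v * vpt (butlast v) l)"
      by (rule sum.cong) (auto simp: sum_distrib_right)
    also have "\<dots> = (\<Sum>v\<in>V. w v * vpt (butlast v) l)" by (rule group)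
    also have "\<dots> = (\<Sum>v\<in>V. w v * (if l \<le> m then vpt v l else 0))"
      by (rule sum.cong) (use VB vpt_butlast in auto)
    finally show ?thesis using w unfolding bary_weights_def by simp
  qed
  ultimately show ?thesis
    using w group[of w] unfolding bary_weights_def by (auto intro: sum_nonneg)
qed

lemma bary_weights_last_coord:
  assumes w: "bary_weights V w p" and len: "\<forall>v\<in>V. length v = Suc m" and W: "finite W" "V \<subseteq> W"
  shows "p (Suc m) = (\<Sum>v\<in>W. w v * real_of_int (last v))"
proof -
  have "p (Suc m) = (\<Sum>v\<in>V. w v * real_of_int (last v))"
    using w len vpt_last unfolding bary_weights_def by (auto intro: sum.cong)
  also have "\<dots> = (\<Sum>v\<in>W. w v * real_of_int (last v))"
    using w W unfolding bary_weights_def by (intro sum.mono_neutral_left) auto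
  finally show ?thesis .
qed

lemma inj_on_last_fibre: "[] \<notin> W \<Longrightarrow> inj_on (\<lambda>v. real_of_int (last v)) {v\<in>W. butlast v = u}"
  by (rule inj_onI) (metis (mono_tags, lifting) append_butlast_last_id mem_Collect_eq of_int_eq_iff)

lemma interval_weights_not_exceed:
  fixes w w' :: "vertex \<Rightarrow> real"
  assumes supp: "\<forall>v. w v \<noteq> 0 \<longrightarrow> v \<in> V" "\<forall>v. w' v \<noteq> 0 \<longrightarrow> v \<in> V'"
    and V: "V \<subseteq> vertex_interval \<omega> b" "V' \<subseteq> vertex_interval \<omega> b'" and ord: "vertex_le \<omega> b b'"
    and ne: "b \<noteq> []" "b' \<noteq> []" "[] \<notin> V"
    and u: "b \<noteq> b' \<or> u \<noteq> butlast b"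
  shows "\<not> weight_exceeds (\<lambda>v. real_of_int (last v)) {v\<in>W. butlast v = u} w w'"
proof
  assume "weight_exceeds (\<lambda>v. real_of_int (last v)) {v\<in>W. butlast v = u} w w'"
  then obtain x x' where x: "x \<in> V" "x' \<in> V'" "butlast x = u" "butlast x' = u" "last x' < last x"
    using supp unfolding weight_exceeds_def by force
  then have "b = b' \<and> x = incr_last b"
    using vertex_interval_fibre_descent[of x \<omega> b x' b'] V ord ne by (metis subsetD)
  then show False using u x(3) by auto
qed

lemma window_step_weights_eq:
  assumes w: "bary_weights V w p" and w': "bary_weights V' w' p"
    and fin: "finite V" "finite V'" and len: "\<forall>v\<in>V \<union> V'. length v = Suc m"
    and mass: "\<forall>u. sum w {v\<in>V. butlast v = u} = sum w' {v\<in>V'. butlast v = u}"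
    and b: "b \<in> V" "V \<subseteq> vertex_interval \<omega> b" and b': "b' \<in> V'" "V' \<subseteq> vertex_interval \<omega> b'"
    and ord: "vertex_le \<omega> b b'"
  shows "w = w'"
proof -
  \<comment> \<open>\<open>incr_last b\<close> is added so that both possible vertices over \<open>butlast b\<close> lie in \<open>W\<close>\<close>
  define W where "W = insert (incr_last b) (V \<union> V')"
  let ?fib = "\<lambda>u. {v\<in>W. butlast v = u}" and ?key = "\<lambda>v. real_of_int (last v)"
  have finW: "finite W" and VW: "V \<subseteq> W" "V' \<subseteq> W" using fin by (auto simp: W_def)
  have supp: "\<forall>v. w v \<noteq> 0 \<longrightarrow> v \<in> V" "\<forall>v. w' v \<noteq> 0 \<longrightarrow> v \<in> V'"
    and nonneg: "\<forall>v\<in>W. 0 \<le> w v" "\<forall>v\<in>W. 0 \<le> w' v"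
    using w w' unfolding bary_weights_def by auto
  have lenV: "\<forall>v\<in>V. length v = Suc m" "\<forall>v\<in>V'. length v = Suc m" using len by auto
  have ne: "[] \<notin> W" "[] \<notin> V" "[] \<notin> V'" "b \<noteq> []" "b' \<noteq> []"
  proof -
    have "v \<noteq> []" if "v \<in> V \<union> V'" for v using that lenV by auto
    moreover have "[] \<noteq> incr_last b" by (metis incr_last_simps(3))
    ultimately show "[] \<notin> W" "[] \<notin> V" "[] \<notin> V'" "b \<noteq> []" "b' \<noteq> []"
      using b b' unfolding W_def by blast+
  qed
  have massW: "\<forall>u. sum w (?fib u) = sum w' (?fib u)"
    using mass sum_fibre_mono_neutral[OF finW VW(1) supp(1), where \<pi> = butlast]
      sum_fibre_mono_neutral[OF finW VW(2) supp(2), where \<pi> = butlast] by simp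
  have moment: "(\<Sum>v\<in>W. w v * ?key v) = (\<Sum>v\<in>W. w' v * ?key v)"
    using bary_weights_last_coord[OF w lenV(1) finW VW(1)] bary_weights_last_coord[OF w' lenV(2) finW VW(2)]
    by simp
  have inj: "\<forall>u. inj_on ?key (?fib u)" using inj_on_last_fibre[OF ne(1)] by blast
  have up: "\<not> weight_exceeds ?key (?fib u) w w'" if "b \<noteq> b' \<or> u \<noteq> butlast b" for u
    using interval_weights_not_exceed[OF supp b(2) b'(2) ord ne(4,5,2) that] .
  have "\<forall>v\<in>W. w v = w' v"
  proof (cases "b = b'")
    case False
    then show ?thesis using weights_eq_if_fibres_not_exceed[OF finW inj nonneg massW moment] up by blast
  next
    case True
    have down: "\<not> weight_exceeds ?key (?fib u) w' w" if "u \<noteq> butlast b" for u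
      using interval_weights_not_exceed[OF supp(2,1) b'(2) b(2) _ ne(5,4,3)] True that vertex_le_refl by blast
    have two: "v = b \<or> v = incr_last b" if "v \<in> V \<union> V'" "butlast v = butlast b" for v
      using vertex_interval_fibre[of v \<omega> b] that b b' True ne by blast
    show ?thesis
    proof (rule weights_eq_if_fibres_not_exceed_but_one[OF finW inj nonneg massW moment])
      show "\<forall>u. u \<noteq> butlast b \<longrightarrow> \<not> weight_exceeds ?key (?fib u) w w' \<and> \<not> weight_exceeds ?key (?fib u) w' w"
        using up down by blast
      show "\<forall>v\<in>W. butlast v = butlast b \<and> v \<noteq> b \<and> v \<noteq> incr_last b \<longrightarrow> w v = 0 \<and> w' v = 0"
        using two supp by blast
    qed (use VW b in \<open>auto simp: W_def\<close>)
  qed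
  with supp VW show ?thesis by (intro fun_eq_if_eq_on_supports) auto
qed

theorem window_bary_weights_unique:
  "window \<omega> m V \<Longrightarrow> window \<omega> m V' \<Longrightarrow> bary_weights V w p \<Longrightarrow> bary_weights V' w' p \<Longrightarrow> w = w'"
proof (induct m arbitrary: V V' w w' p)
  case 0
  have "\<forall>v. w v \<noteq> 0 \<longrightarrow> v \<in> V" "sum w V = 1" "\<forall>v. w' v \<noteq> 0 \<longrightarrow> v \<in> V'" "sum w' V' = 1"
    using "0.prems"(3,4) unfolding bary_weights_def by blast+
  moreover have "V = {[]}" "V' = {[]}" using "0.prems"(1,2) by simp_all
  ultimately show ?case by (metis ext singletonD sum.empty sum.insert empty_iff finite.emptyI add.right_neutral)
next
  case (Suc m)
  from Suc.prems(1) obtain B b where fin: "finite V"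
    and B: "window \<omega> m B" "\<forall>v\<in>V. length v = Suc m \<and> butlast v \<in> B"
    and b: "b \<in> V" "V \<subseteq> vertex_interval (\<omega> m) b" by auto
  from Suc.prems(2) obtain B' b' where fin': "finite V'"
    and B': "window \<omega> m B'" "\<forall>v\<in>V'. length v = Suc m \<and> butlast v \<in> B'"
    and b': "b' \<in> V'" "V' \<subseteq> vertex_interval (\<omega> m) b'" by auto
  have "(\<lambda>u. sum w {v\<in>V. butlast v = u}) = (\<lambda>u. sum w' {v\<in>V'. butlast v = u})"
    by (rule Suc.hyps[OF B(1) B'(1) bary_weights_butlast[OF Suc.prems(3) fin window_finite[OF B(1)] B(2)]
          bary_weights_butlast[OF Suc.prems(4) fin' window_finite[OF B'(1)] B'(2)]])
  then have mass: "\<forall>u. sum w {v\<in>V. butlast v = u} = sum w' {v\<in>V'. butlast v = u}"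
    by (simp add: fun_eq_iff)
  have len: "\<forall>v\<in>V \<union> V'. length v = Suc m" using B B' by auto
  consider "vertex_le (\<omega> m) b b'" | "vertex_le (\<omega> m) b' b" using vertex_le_linear by blast
  then show ?case
  proof cases
    case 1
    show ?thesis by (rule window_step_weights_eq[OF Suc.prems(3,4) fin fin' len mass b b' 1])
  next
    case 2
    have "w' = w"
      by (rule window_step_weights_eq[OF Suc.prems(4,3) fin' fin _ _ b' b 2]) (use len mass in auto)
    then show ?thesis ..
  qed
qed

definition list_weight :: "vertex list \<Rightarrow> (nat \<Rightarrow> real) \<Rightarrow> vertex \<Rightarrow> real" where
  "list_weight L t v = sum t {i. i < length L \<and> L ! i = v}"

lemma list_weight_notin: "v \<notin> set L \<Longrightarrow> list_weight L t v = 0"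
proof -
  assume "v \<notin> set L"
  then have "{i. i < length L \<and> L ! i = v} = {}" by (auto simp: in_set_conv_nth)
  then show ?thesis unfolding list_weight_def by (simp only: sum.empty)
qed

lemma sum_list_weight:
  fixes g :: "vertex \<Rightarrow> 'b::real_vector"
  shows "(\<Sum>v\<in>set L. list_weight L t v *\<^sub>R g v) = (\<Sum>i<length L. t i *\<^sub>R g (L ! i))"
proof -
  have "(\<Sum>i<length L. t i *\<^sub>R g (L ! i)) = (\<Sum>v\<in>set L. \<Sum>i\<in>{i\<in>{..<length L}. L ! i = v}. t i *\<^sub>R g (L ! i))"
    by (rule sum.group[symmetric]) auto
  also have "\<dots> = (\<Sum>v\<in>set L. list_weight L t v *\<^sub>R g v)"
    unfolding list_weight_def scaleR_sum_left by (intro sum.cong) auto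
  finally show ?thesis by simp
qed

lemma sum_list_weight_mult:
  "(\<Sum>v\<in>set L. list_weight L t v * g v) = (\<Sum>i<length L. t i * (g (L ! i) :: real))"
  using sum_list_weight[of L t g] by simp

lemma sum_list_weight_of_real_mult:
  "(\<Sum>v\<in>set L. complex_of_real (list_weight L t v) * g v) =
   (\<Sum>i<length L. complex_of_real (t i) * (g (L ! i) :: complex))"
  using sum_list_weight[of L t g] by (simp add: scaleR_conv_of_real)

lemma sum_list_weight_cong:
  assumes w: "list_weight L t = list_weight L' t'"
  shows "(\<Sum>v\<in>set L. complex_of_real (list_weight L t v) * g v) =
    (\<Sum>v\<in>set L'. complex_of_real (list_weight L' t' v) * g v)"
proof -
  let ?h = "\<lambda>v. complex_of_real (list_weight L t v) * g v"
  have "sum ?h (set L) = sum ?h (set L \<union> set L')"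
    by (rule sum.mono_neutral_left) (auto simp: list_weight_notin)
  also have "\<dots> = sum ?h (set L')"
    by (rule sum.mono_neutral_right) (auto simp: list_weight_notin w)
  finally show ?thesis unfolding w .
qed

lemma bary_weights_list_weight:
  assumes "\<forall>i<length L. 0 \<le> t i" "(\<Sum>i<length L. t i) = 1"
  shows "bary_weights (set L) (list_weight L t) (\<lambda>l. \<Sum>i<length L. t i * vpt (L ! i) l)"
  unfolding bary_weights_def
proof (intro conjI allI impI)
  fix v assume "list_weight L t v \<noteq> 0"
  then show "v \<in> set L" using list_weight_notin by blast
next
  fix v show "0 \<le> list_weight L t v" unfolding list_weight_def using assms by (auto intro: sum_nonneg)
next
  show "sum (list_weight L t) (set L) = 1" using sum_list_weight_mult[of L t "\<lambda>_. 1"] assms by simp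
qed (simp add: sum_list_weight_mult)

lemma vpt_in_gsimp: "i < length S \<Longrightarrow> vpt (S ! i) \<in> gsimp S"
  unfolding gsimp_def
  using sum_unit_weight[where f = "\<lambda>_. 1 :: real"] sum_unit_weight[where f = "\<lambda>k. vpt (S ! k) _ :: real"]
  by (intro CollectI exI[of _ "\<lambda>k. if k = i then 1 else 0"]) auto

section \<open>The simplices of the complex are windows\<close>

definition A_precedes :: "(vertex \<Rightarrow> real) \<Rightarrow> osimplex \<Rightarrow> nat \<Rightarrow> nat \<Rightarrow> bool" where
  "A_precedes \<omega> S i k \<longleftrightarrow>
     Acoord \<omega> (S ! i) < Acoord \<omega> (S ! k) \<or> (Acoord \<omega> (S ! i) = Acoord \<omega> (S ! k) \<and> i < k)"

lemma Arank_less: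
  assumes "i < length S" "A_precedes \<omega> S i k"
  shows "Arank \<omega> S i < Arank \<omega> S k"
proof -
  have "{i'. i' < length S \<and> A_precedes \<omega> S i' i} \<subset> {i'. i' < length S \<and> A_precedes \<omega> S i' k}"
    using assms unfolding A_precedes_def by auto
  then show ?thesis unfolding Arank_def A_precedes_def[symmetric] by (intro psubset_card_mono) auto
qed

lemma Arank_le_cases:
  assumes "i < length S" "k < length S" "Arank \<omega> S i \<le> Arank \<omega> S k"
  shows "i = k \<or> A_precedes \<omega> S i k"
  using assms Arank_less[of k S \<omega> i] unfolding A_precedes_def by fastforce

lemma Acoord_bounds: "0 < Acoord \<omega> u" "Acoord \<omega> u \<le> 1"
  unfolding Acoord_def by (smt (verit) ceiling_correct)+

lemma height_lift: "height \<omega> (u @ [acoord \<omega> u + l]) = Acoord \<omega> u + real_of_int l"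
  unfolding height_def Acoord_def acoord_def by simp

lemma height_lift_pred: "height \<omega> (u @ [acoord \<omega> u + l - 1]) = Acoord \<omega> u + real_of_int l - 1"
  unfolding height_def Acoord_def acoord_def by simp

lemma mem_Ysimp:
  assumes "v \<in> set (Ysimp \<omega> S k l)"
  obtains i where "i < length S"
    "v = S ! i @ [acoord \<omega> (S ! i) + l]" "Arank \<omega> S i \<le> Arank \<omega> S k"
  | i where "i < length S"
    "v = S ! i @ [acoord \<omega> (S ! i) + l - 1]" "Arank \<omega> S k \<le> Arank \<omega> S i"
  using assms unfolding Ysimp_def Let_def by (auto split: if_splits)

lemma base_in_Ysimp:
  "k < length S \<Longrightarrow> S ! k @ [acoord \<omega> (S ! k) + l - 1] \<in> set (Ysimp \<omega> S k l)"
  unfolding Ysimp_def Let_def by (auto intro!: bexI[of _ k])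

lemma Ysimp_in_vertex_interval:
  assumes sorted: "sorted_wrt (\<lambda>a b. ord_class.lexordp b a) S"
    and k: "k < length S" and v: "v \<in> set (Ysimp \<omega> S k l)"
  shows "v \<in> vertex_interval \<omega> (S ! k @ [acoord \<omega> (S ! k) + l - 1])"
proof -
  let ?b = "S ! k @ [acoord \<omega> (S ! k) + l - 1]"
  have incr: "incr_last ?b = S ! k @ [acoord \<omega> (S ! k) + l]" by (simp add: incr_last_def)
  have heights: "height \<omega> ?b = Acoord \<omega> (S ! k) + l - 1" "height \<omega> (incr_last ?b) = Acoord \<omega> (S ! k) + l"
    unfolding incr height_lift height_lift_pred by simp_all
  have lex: "ord_class.lexordp (S ! j) (S ! i)" if "i < j" "j < length S" for i j
    using sorted that by (simp add: sorted_wrt_iff_nth_less)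
  note A = Acoord_bounds[of \<omega> "S ! _"]
  from v show ?thesis
  proof (cases rule: mem_Ysimp)
    case (1 i)
    then have "i = k \<or> A_precedes \<omega> S i k" using Arank_le_cases k by blast
    then show ?thesis
      using 1 A[of i] A[of k] lex[of i k] k unfolding vertex_interval_def vertex_le_def heights
      by (auto simp: height_lift height_lift_pred A_precedes_def incr)
  next
    case (2 i)
    then have "i = k \<or> A_precedes \<omega> S k i" using Arank_le_cases k by blast
    then show ?thesis
      using 2 A[of i] A[of k] lex[of k i] unfolding vertex_interval_def vertex_le_def heights
      by (auto simp: height_lift height_lift_pred A_precedes_def incr)
  qed
qed

lemma sorted_Ysimp:
  assumes "sorted_wrt (\<lambda>a b. ord_class.lexordp b a) S" "\<forall>u\<in>set S. length u = m"
  shows "sorted_wrt (\<lambda>a b. ord_class.lexordp b a) (Ysimp \<omega> S k l)"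
proof -
  have cm: "sorted_wrt R (concat (map f xs))"
    if "\<forall>x\<in>set xs. sorted_wrt R (f x)" "sorted_wrt (\<lambda>x y. \<forall>a\<in>set (f x). \<forall>b\<in>set (f y). R a b) xs"
    for R and f :: "nat \<Rightarrow> vertex list" and xs
    using that by (induct xs) (auto simp: sorted_wrt_append)
  show ?thesis
    unfolding Ysimp_def Let_def
  proof (rule cm, goal_cases)
    case 1
    show ?case using assms(2) by (auto simp: lexordp_append_same_length)
  next
    case 2
    show ?case
      using assms unfolding sorted_wrt_iff_nth_less by (auto simp: lexordp_append_same_length)
  qed
qed

text \<open>The linear form \<open>\<omega>\<close> of the step from \<open>X\<^sub>m\<close> to \<open>X\<^sub>m\<^sub>+\<^sub>1\<close>.\<close>

definition step_omega :: "nat \<Rightarrow> nat \<Rightarrow> (nat \<Rightarrow> 'a \<Rightarrow> complex) \<Rightarrow> (nat \<Rightarrow> 'a) \<Rightarrow> (nat \<Rightarrow> nat) \<Rightarrow> nat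
    \<Rightarrow> vertex \<Rightarrow> real" where
  "step_omega r1 r2 tau eps N m =
     (if m < r1 + r2 - 1 then (\<lambda>_. 0) else omega_j r1 r2 tau eps N (m - (r1 + r2 - 1) + 1))"

lemma Xcx_window:
  "S \<in> Xcx r1 r2 tau eps N m \<Longrightarrow> sorted_wrt (\<lambda>a b. ord_class.lexordp b a) S \<and>
     (\<forall>u\<in>set S. length u = m) \<and> window (step_omega r1 r2 tau eps N) m (set S)"
proof (induct m arbitrary: S)
  case (Suc m)
  let ?\<omega> = "step_omega r1 r2 tau eps N m"
  obtain T k l where T: "T \<in> Xcx r1 r2 tau eps N m" "k < length T" and S: "S = Ysimp ?\<omega> T k l"
    using Suc.prems by (auto simp: Ycx_def step_omega_def Let_def split: if_splits)
  from Suc.hyps[OF T(1)] have sorted: "sorted_wrt (\<lambda>a b. ord_class.lexordp b a) T"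
    and len: "\<forall>u\<in>set T. length u = m" and win: "window (step_omega r1 r2 tau eps N) m (set T)"
    by auto
  have VT: "\<forall>v\<in>set S. length v = Suc m \<and> butlast v \<in> set T"
  proof
    fix v assume "v \<in> set S"
    then show "length v = Suc m \<and> butlast v \<in> set T"
      unfolding S by (cases rule: mem_Ysimp) (use len in auto)
  qed
  let ?b = "T ! k @ [acoord ?\<omega> (T ! k) + l - 1]"
  have b: "?b \<in> set S" "set S \<subseteq> vertex_interval ?\<omega> ?b"
    unfolding S using base_in_Ysimp[OF T(2)] Ysimp_in_vertex_interval[OF sorted T(2)] by auto
  then have "window (step_omega r1 r2 tau eps N) (Suc m) (set S)"
    using VT win by auto
  then show ?case using sorted_Ysimp[OF sorted len] VT unfolding S by simp
qed simp

lemma step_omega_translate: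
  "\<exists>c. \<forall>u. length u = s \<longrightarrow> step_omega r1 r2 tau eps N s (translate lam u) = step_omega r1 r2 tau eps N s u + c"
proof (cases "s < r1 + r2 - 1")
  case False
  let ?j = "s - (r1 + r2 - 1) + 1"
  let ?c = "real (N ?j) / (2 * pi) * (\<Sum>l\<in>{1..r1+r2-1}. real_of_int (lam l) * Arg (tau (r1 + ?j) (eps l)))"
  have "step_omega r1 r2 tau eps N s (translate lam u) = step_omega r1 r2 tau eps N s u + ?c"
    if "length u = s" for u
  proof -
    have "\<forall>l\<in>{1..r1+r2-1}. translate lam u ! (l - 1) = u ! (l - 1) + lam l"
      using False that by auto
    then have "(\<Sum>l\<in>{1..r1+r2-1}. real_of_int (translate lam u ! (l - 1)) * Arg (tau (r1 + ?j) (eps l))) =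
       (\<Sum>l\<in>{1..r1+r2-1}. real_of_int (u ! (l - 1)) * Arg (tau (r1 + ?j) (eps l))) +
       (\<Sum>l\<in>{1..r1+r2-1}. real_of_int (lam l) * Arg (tau (r1 + ?j) (eps l)))"
      by (simp add: sum.distrib[symmetric] algebra_simps)
    then show ?thesis
      using False by (simp add: step_omega_def omega_j_def algebra_simps)
  qed
  then show ?thesis by blast
qed (simp add: step_omega_def)

lemma Omega_convex_comb:
  "Omega r1 r2 tau eps N j (\<lambda>l. \<Sum>i<n. t i * g i l) = (\<Sum>i<n. t i * Omega r1 r2 tau eps N j (g i))"
proof -
  have "(\<Sum>l\<in>{1..r1+r2-1}. (\<Sum>i<n. t i * g i l) * Arg (tau (r1 + j) (eps l))) =
        (\<Sum>i<n. \<Sum>l\<in>{1..r1+r2-1}. t i * (g i l * Arg (tau (r1 + j) (eps l))))"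
    by (subst sum.swap) (simp add: sum_distrib_right mult.assoc)
  then show ?thesis unfolding Omega_def
    by (simp add: sum.distrib sum_distrib_left algebra_simps)
qed

lemma Omega_vpt_eq_height:
  assumes len: "length v = r1 + 2 * r2 - 1" and r: "1 \<le> r1 + r2" and j: "j \<in> {1..r2}"
  shows "Omega r1 r2 tau eps N j (vpt v) =
    height (step_omega r1 r2 tau eps N (r1 + r2 - 1 + j - 1)) (take (r1 + r2 - 1 + j) v)"
proof -
  let ?R = "r1 + r2 - 1"
  have j: "1 \<le> j" "j \<le> r2" using j by auto
  have "step_omega r1 r2 tau eps N (?R + j - 1) = omega_j r1 r2 tau eps N j"
    unfolding step_omega_def using j by auto
  moreover have "last (take (?R + j) v) = v ! (?R + j - 1)"
    using len j r by (subst last_conv_nth) auto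
  moreover have "butlast (take (?R + j) v) = take (?R + j - 1) v"
    using len j r by (simp add: butlast_take)
  moreover have "(\<Sum>l\<in>{1..?R}. vpt v l * Arg (tau (r1 + j) (eps l))) =
     (\<Sum>l\<in>{1..?R}. real_of_int (take (?R + j - 1) v ! (l - 1)) * Arg (tau (r1 + j) (eps l)))"
    using len j unfolding vpt_def by (intro sum.cong) auto
  moreover have "vpt v (?R + j) = real_of_int (v ! (?R + j - 1))"
    using len j r unfolding vpt_def by auto
  ultimately show ?thesis unfolding Omega_def height_def omega_j_def by simp
qed

section \<open>Complex embeddings, sectors and positive reals\<close>

lemma number_field_emb_nonempty:
  assumes "number_field_emb r1 r2 (tau :: nat \<Rightarrow> 'a::field_char_0 \<Rightarrow> complex)"
  shows "1 \<le> r1 + r2"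
proof (rule ccontr)
  assume "\<not> 1 \<le> r1 + r2"
  then have "r1 + 2 * r2 = 0" by simp
  moreover have "\<exists>b :: nat \<Rightarrow> 'a. \<forall>x. \<exists>q :: nat \<Rightarrow> rat. x = (\<Sum>i<r1 + 2*r2. of_rat (q i) * b i)"
    using assms unfolding number_field_emb_def by (elim conjE exE) blast
  then obtain b :: "nat \<Rightarrow> 'a" where "\<forall>x. \<exists>q :: nat \<Rightarrow> rat. x = (\<Sum>i<r1 + 2*r2. of_rat (q i) * b i)" ..
  ultimately have "(1::'a) = 0" by auto
  then show False by simp
qed

lemma number_field_emb_hom:
  assumes "number_field_emb r1 r2 tau" "i \<in> {1..r1+r2}"
  shows "is_ring_hom_C (tau i)"
proof -
  have "\<forall>i\<in>{1..r1+r2}. is_ring_hom_C (tau i)" using assms(1) unfolding number_field_emb_def by (elim conjE)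
  then show ?thesis using assms(2) by blast
qed

lemma ring_hom_C_zero: "is_ring_hom_C s \<Longrightarrow> s 0 = 0"
  unfolding is_ring_hom_C_def by (metis add.right_neutral add_left_cancel)

lemma ring_hom_C_mult: "is_ring_hom_C s \<Longrightarrow> s (x * y) = s x * s y"
  unfolding is_ring_hom_C_def by blast

lemma ring_hom_C_mult_inverse: "is_ring_hom_C s \<Longrightarrow> x \<noteq> 0 \<Longrightarrow> s x * s (inverse x) = 1"
  unfolding is_ring_hom_C_def by (metis right_inverse)

lemma ring_hom_C_nonzero: "is_ring_hom_C s \<Longrightarrow> x \<noteq> 0 \<Longrightarrow> s x \<noteq> 0"
  using ring_hom_C_mult_inverse by fastforce

lemma ring_hom_C_inverse: assumes h: "is_ring_hom_C s" shows "s (inverse x) = inverse (s x)"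
proof (cases "x = 0")
  case False
  then show ?thesis using inverse_unique[OF ring_hom_C_mult_inverse[OF h False]] by simp
qed (simp add: ring_hom_C_zero[OF h])

lemma ring_hom_C_power_int: "is_ring_hom_C s \<Longrightarrow> s (x powi k) = s x powi k"
proof -
  assume h: "is_ring_hom_C s"
  then have "s (x ^ n) = s x ^ n" for x n unfolding is_ring_hom_C_def by (induct n) auto
  then show ?thesis unfolding power_int_def using ring_hom_C_inverse[OF h] by simp
qed

lemma ring_hom_C_prod:
  assumes h: "is_ring_hom_C s" and A: "finite A"
  shows "s (prod f A) = (\<Prod>a\<in>A. s (f a))"
  using A by (induct A rule: finite_induct) (use h in \<open>auto simp: is_ring_hom_C_def\<close>)

lemma ring_hom_C_eps_pow:
  "is_ring_hom_C s \<Longrightarrow> s (eps_pow r eps X) = (\<Prod>l\<in>{1..r}. s (eps l) powi X l)"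
  unfolding eps_pow_def by (simp add: ring_hom_C_prod ring_hom_C_power_int)

lemma eps_pow_add:
  "\<forall>l\<in>{1..r}. eps l \<noteq> 0 \<Longrightarrow> eps_pow r eps (\<lambda>l. x l + y l) = eps_pow r eps x * eps_pow r eps y"
  unfolding eps_pow_def by (simp add: power_int_add prod.distrib[symmetric])

lemma Hsect_eq_rotated_half_plane:
  "Hsect t = (\<lambda>q. exp (2 * complex_of_real pi * \<i> * complex_of_real t) * q) ` {q. 0 < Re q}"
  (is "_ = ?rot ` _")
proof (intro equalityI subsetI)
  fix z assume "z \<in> Hsect t"
  then obtain \<rho> \<theta> where r: "\<rho> > 0" "-1/4 < \<theta>" "\<theta> < 1/4"
    "z = complex_of_real \<rho> * exp (2 * complex_of_real pi * \<i> * complex_of_real (t + \<theta>))"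
    unfolding Hsect_def by blast
  let ?q = "complex_of_real \<rho> * exp (\<i> * complex_of_real (2 * pi * \<theta>))"
  have "- (pi / 2) < 2 * pi * \<theta>" "2 * pi * \<theta> < pi / 2"
    using mult_strict_left_mono[OF r(2), of "2 * pi"] mult_strict_left_mono[OF r(3), of "2 * pi"] by simp_all
  then have "cos (2 * pi * \<theta>) > 0" by (rule cos_gt_zero_pi)
  then have "0 < Re ?q" using r(1) by (simp add: Re_exp)
  moreover have "z = ?rot ?q" unfolding r(4) by (simp add: exp_add[symmetric] algebra_simps)
  ultimately show "z \<in> ?rot ` {q. 0 < Re q}" by blast
next
  fix z assume "z \<in> ?rot ` {q. 0 < Re q}"
  then obtain q where q: "0 < Re q" "z = ?rot q" by blast
  then have "q \<noteq> 0" by auto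
  have "\<bar>Arg q\<bar> < pi / 2" using q(1) Arg_Re_pos by blast
  then have "-1/4 < Arg q / (2 * pi)" "Arg q / (2 * pi) < 1/4"
    by (auto simp: field_simps abs_less_iff)
  moreover have "2 * complex_of_real pi * \<i> * complex_of_real (t + Arg q / (2 * pi)) =
      2 * complex_of_real pi * \<i> * complex_of_real t + \<i> * complex_of_real (Arg q)"
    using pi_gt_zero by (simp add: field_simps)
  then have "z = complex_of_real (norm q) * exp (2 * complex_of_real pi * \<i> * complex_of_real (t + Arg q / (2 * pi)))"
    unfolding q(2) by (subst Arg_eq[OF \<open>q \<noteq> 0\<close>]) (simp add: exp_add algebra_simps)
  moreover have "0 < norm q" using \<open>q \<noteq> 0\<close> by simp
  ultimately show "z \<in> Hsect t" unfolding Hsect_def by blast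
qed

lemma Hsect_nonzero: "z \<in> Hsect t \<Longrightarrow> z \<noteq> 0"
  unfolding Hsect_def by auto

lemma scaled_convex_comb_in_Hsect:
  fixes t :: "nat \<Rightarrow> real" and z :: "nat \<Rightarrow> complex"
  assumes t: "\<forall>i<n. 0 \<le> t i" "(\<Sum>i<n. t i) = 1" and e: "0 < e" and z: "\<forall>i<n. z i \<in> Hsect a"
  shows "complex_of_real e * (\<Sum>i<n. complex_of_real (t i) * z i) \<in> Hsect a"
proof -
  let ?\<mu> = "exp (2 * complex_of_real pi * \<i> * complex_of_real a)"
  have "\<forall>i<n. \<exists>q. 0 < Re q \<and> z i = ?\<mu> * q"
    using z unfolding Hsect_eq_rotated_half_plane by blast
  then obtain q where q: "\<forall>i<n. 0 < Re (q i) \<and> z i = ?\<mu> * q i" by metis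
  have "0 < Re (complex_of_real e * (\<Sum>i<n. complex_of_real (t i) * q i))"
    using convex_comb_pos[OF t, of "\<lambda>i. Re (q i)"] q e by (simp add: Re_sum)
  moreover have "complex_of_real e * (\<Sum>i<n. complex_of_real (t i) * z i) =
      ?\<mu> * (complex_of_real e * (\<Sum>i<n. complex_of_real (t i) * q i))"
    using q by (simp add: sum_distrib_left algebra_simps)
  ultimately show ?thesis unfolding Hsect_eq_rotated_half_plane by blast
qed

lemma sector_angle_bound:
  fixes n t \<Omega> a :: real
  assumes "0 < n" "\<bar>t\<bar> / n < 1/4 - 1 / (2 * n)" "a \<le> \<Omega>" "\<Omega> \<le> a + 1"
  shows "-1/4 < (\<Omega> + t - a - 1/2) / n \<and> (\<Omega> + t - a - 1/2) / n < 1/4"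
proof -
  have "\<bar>\<Omega> + t - a - 1/2\<bar> / n \<le> (1/2 + \<bar>t\<bar>) / n"
    using assms(1,3,4) by (intro divide_right_mono) linarith+
  also have "\<dots> < 1/4" using assms(1,2) by (simp add: field_simps)
  finally have "\<bar>(\<Omega> + t - a - 1/2) / n\<bar> < 1/4" using assms(1) by simp
  then show ?thesis by linarith
qed

definition pos_real :: "complex \<Rightarrow> bool" where
  "pos_real z \<longleftrightarrow> (\<exists>r>0. z = complex_of_real r)"

lemma pos_real_iff: "pos_real z \<longleftrightarrow> z \<in> \<real> \<and> Re z > 0"
  unfolding pos_real_def by (metis Reals_cases Reals_of_real of_real_Re Re_complex_of_real)

lemma pos_real_mult: "pos_real a \<Longrightarrow> pos_real b \<Longrightarrow> pos_real (a * b)"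
  unfolding pos_real_def by (metis mult_pos_pos of_real_mult)

lemma pos_real_power_int: "pos_real a \<Longrightarrow> pos_real (a powi k)"
  unfolding pos_real_def by (metis of_real_power_int zero_less_power_int)

lemma pos_real_prod: "finite A \<Longrightarrow> (\<forall>a\<in>A. pos_real (f a)) \<Longrightarrow> pos_real (prod f A)"
proof (induct A rule: finite_induct)
  case empty then show ?case unfolding pos_real_def by (intro exI[of _ 1]) simp
qed (simp add: pos_real_mult)

lemma pos_real_scaled_convex_comb:
  fixes t :: "nat \<Rightarrow> real" and z :: "nat \<Rightarrow> complex"
  assumes t: "\<forall>i<n. 0 \<le> t i" "(\<Sum>i<n. t i) = 1" and e: "0 < e" and z: "\<forall>i<n. pos_real (z i)"
  shows "pos_real (complex_of_real e * (\<Sum>i<n. complex_of_real (t i) * z i))"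
proof -
  obtain r where r: "\<forall>i<n. 0 < r i \<and> z i = complex_of_real (r i)" using z unfolding pos_real_def by metis
  then have "complex_of_real e * (\<Sum>i<n. complex_of_real (t i) * z i) = complex_of_real (e * (\<Sum>i<n. t i * r i))"
    by simp
  moreover have "0 < e * (\<Sum>i<n. t i * r i)" using convex_comb_pos[OF t, of r] r e by simp
  ultimately show ?thesis unfolding pos_real_def by blast
qed

lemma polar_power_int: "(complex_of_real a * exp b) powi k = complex_of_real (a powi k) * exp (of_int k * b)"
  by (simp add: power_int_mult_distrib exp_power_int)

lemma polar_prod:
  "finite A \<Longrightarrow> (\<Prod>l\<in>A. complex_of_real (a l) * exp (b l)) = complex_of_real (\<Prod>l\<in>A. a l) * exp (\<Sum>l\<in>A. b l)"
  by (induct A rule: finite_induct) (auto simp: exp_add algebra_simps)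

lemma ring_hom_C_eps_pow_polar:
  assumes hom: "is_ring_hom_C s" and nz: "\<forall>l\<in>{1..r}. eps l \<noteq> 0"
  shows "\<exists>\<rho>>0. s (eps_pow r eps X) =
    complex_of_real \<rho> * exp (\<i> * complex_of_real (\<Sum>l\<in>{1..r}. real_of_int (X l) * Arg (s (eps l))))"
proof -
  have snz: "s (eps l) \<noteq> 0" if "l \<in> {1..r}" for l using ring_hom_C_nonzero[OF hom] nz that by blast
  have "s (eps_pow r eps X) = (\<Prod>l\<in>{1..r}. complex_of_real (cmod (s (eps l)) powi X l) *
        exp (of_int (X l) * (\<i> * complex_of_real (Arg (s (eps l))))))"
    unfolding ring_hom_C_eps_pow[OF hom]
    by (rule prod.cong[OF refl]) (metis Arg_eq snz polar_power_int)
  also have "\<dots> = complex_of_real (\<Prod>l\<in>{1..r}. cmod (s (eps l)) powi X l) *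
      exp (\<Sum>l\<in>{1..r}. of_int (X l) * (\<i> * complex_of_real (Arg (s (eps l)))))"
    by (rule polar_prod) simp
  also have "\<dots> = complex_of_real (\<Prod>l\<in>{1..r}. cmod (s (eps l)) powi X l) *
      exp (\<i> * complex_of_real (\<Sum>l\<in>{1..r}. real_of_int (X l) * Arg (s (eps l))))"
    by (simp add: sum_distrib_left algebra_simps)
  finally show ?thesis using snz by (intro exI[of _ "\<Prod>l\<in>{1..r}. cmod (s (eps l)) powi X l"]) (auto intro: prod_pos)
qed

lemma ftilde_embedding_polar:
  fixes tau :: "nat \<Rightarrow> 'a::field_char_0 \<Rightarrow> complex"
  assumes hom: "is_ring_hom_C (tau (r1 + j))" and j: "j \<in> {1..r2}" and Nj: "0 < N j"
    and nz: "\<forall>l\<in>{1..r1+r2-1}. eps l \<noteq> 0" and tw: "twister r1 r2 tau N beta"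
    and X: "X \<in> int_points (r1 + r2 - 1 + r2)"
  shows "\<exists>\<rho>>0. \<exists>t. \<bar>t\<bar> / real (N j) < 1/4 - 1 / (2 * real (N j)) \<and>
     tau (r1 + j) (beta X * eps_pow (r1+r2-1) eps X) = complex_of_real \<rho> *
       exp (2 * complex_of_real pi * \<i> *
         complex_of_real ((Omega r1 r2 tau eps N j (\<lambda>l. real_of_int (X l)) + t) / real (N j)))"
proof -
  let ?s = "tau (r1 + j)" and ?R = "r1 + r2 - 1" and ?Nj = "real (N j)"
  let ?\<phi> = "\<Sum>l\<in>{1..?R}. real_of_int (X l) * Arg (?s (eps l))"
  from tw X j obtain t where t: "\<bar>t\<bar> / ?Nj < 1/4 - 1 / (2 * ?Nj)"
    "?s (beta X) / complex_of_real (cmod (?s (beta X))) =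
      exp (2 * complex_of_real pi * \<i> * complex_of_real ((real_of_int (X (?R + j)) + t) / ?Nj))"
    and "totally_positive r1 tau (beta X)"
    unfolding twister_def Let_def by blast
  then have "?s (beta X) \<noteq> 0" using ring_hom_C_nonzero[OF hom] unfolding totally_positive_def by blast
  then have beta: "?s (beta X) = complex_of_real (cmod (?s (beta X))) *
      exp (2 * complex_of_real pi * \<i> * complex_of_real ((real_of_int (X (?R + j)) + t) / ?Nj))"
    using t(2) by (simp add: field_simps)
  obtain \<rho> where \<rho>: "\<rho> > 0" "?s (eps_pow ?R eps X) = complex_of_real \<rho> * exp (\<i> * complex_of_real ?\<phi>)"
    using ring_hom_C_eps_pow_polar[OF hom nz] by blast
  have angle: "2 * complex_of_real pi * \<i> * complex_of_real ((real_of_int (X (?R + j)) + t) / ?Nj) +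
      \<i> * complex_of_real ?\<phi> = 2 * complex_of_real pi * \<i> *
      complex_of_real ((Omega r1 r2 tau eps N j (\<lambda>l. real_of_int (X l)) + t) / ?Nj)"
    using Nj pi_gt_zero unfolding Omega_def by (simp add: field_simps)
  have "?s (beta X * eps_pow ?R eps X) = complex_of_real (cmod (?s (beta X)) * \<rho>) *
      exp (2 * complex_of_real pi * \<i> *
        complex_of_real ((Omega r1 r2 tau eps N j (\<lambda>l. real_of_int (X l)) + t) / ?Nj))"
    unfolding ring_hom_C_mult[OF hom] angle[symmetric] exp_add by (subst beta, subst \<rho>(2)) simp
  then show ?thesis using \<rho>(1) \<open>?s (beta X) \<noteq> 0\<close> t(1) by (intro exI[of _ "cmod (?s (beta X)) * \<rho>"]) auto
qed

lemma pos_real_embedding: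
  fixes tau :: "nat \<Rightarrow> 'a::field_char_0 \<Rightarrow> complex"
  assumes hom: "is_ring_hom_C (tau c)" and c: "c \<in> {1..r1}"
    and b: "totally_positive r1 tau b" and eps: "\<forall>l\<in>{1..r}. totally_positive r1 tau (eps l)"
  shows "pos_real (tau c (b * eps_pow r eps X))"
proof -
  have "pos_real (tau c b)" "\<forall>l\<in>{1..r}. pos_real (tau c (eps l) powi X l)"
    using b eps c pos_real_power_int unfolding totally_positive_def pos_real_iff by auto
  then show ?thesis
    unfolding ring_hom_C_mult[OF hom] ring_hom_C_eps_pow[OF hom] by (simp add: pos_real_mult pos_real_prod)
qed

section \<open>The map f\<close>

lemma Hcal_subset_posCstar: "Hcal r1 r2 N a \<subseteq> posCstar r1 r2"
  unfolding Hcal_def posCstar_def using Hsect_nonzero by blast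

context
  fixes r1 r2 :: nat
    and tau :: "nat \<Rightarrow> 'a::field_char_0 \<Rightarrow> complex"
    and eps :: "nat \<Rightarrow> 'a"
    and N :: "nat \<Rightarrow> nat"
    and beta :: "(nat \<Rightarrow> int) \<Rightarrow> 'a"
    and A :: "(nat \<Rightarrow> real) \<Rightarrow> (nat \<Rightarrow> complex)"
  assumes nf: "number_field_emb r1 r2 tau"
    and units: "\<forall>l\<in>{1..r1+r2-1}. nf_unit (eps l) \<and> totally_positive r1 tau (eps l)"
    and N3: "\<forall>j\<in>{1..r2}. N j \<ge> 3"
    and tw: "twister r1 r2 tau N beta"
    and A: "admissible_A r1 r2 tau eps N beta A"
begin

lemma dim_eq: "r1 + 2 * r2 - 1 = (r1 + r2 - 1) + r2"
  using number_field_emb_nonempty[OF nf] by simp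

lemma frakI_window:
  assumes "S \<in> frakI r1 r2 tau eps N"
  shows "\<forall>u\<in>set S. length u = r1 + 2 * r2 - 1"
    "window (step_omega r1 r2 tau eps N) (r1 + 2 * r2 - 1) (set S)"
  using Xcx_window assms unfolding frakI_def by blast+

lemma vint_frakI_vertex:
  "S \<in> frakI r1 r2 tau eps N \<Longrightarrow> k < length S \<Longrightarrow> vint (S ! k) \<in> int_points (r1 + r2 - 1 + r2)"
  using frakI_window(1)[of S] vint_int_points[of "S ! k"] dim_eq by simp

lemma A_convex_comb:
  "S \<in> frakI r1 r2 tau eps N \<Longrightarrow> \<forall>i<length S. 0 \<le> t i \<Longrightarrow> (\<Sum>i<length S. t i) = 1 \<Longrightarrow>
   A (\<lambda>l. \<Sum>i<length S. t i * vpt (S ! i) l) =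
   (\<lambda>c. \<Sum>i<length S. complex_of_real (t i) * emb r1 r2 tau (ftilde (r1 + r2 - 1) eps beta (S ! i)) c)"
  using A unfolding admissible_A_def by blast

lemma A_vertex:
  assumes S: "S \<in> frakI r1 r2 tau eps N" and i: "i < length S"
  shows "A (vpt (S ! i)) = emb r1 r2 tau (ftilde (r1 + r2 - 1) eps beta (S ! i))"
  using A_convex_comb[OF S, of "\<lambda>k. if k = i then 1 else 0"] i
    sum_unit_weight[OF i, where f = "\<lambda>_. 1 :: real"] sum_unit_weight[OF i, where f = "\<lambda>k. vpt (S ! k) _"]
    sum_unit_weight[OF i, where f = "\<lambda>k. emb r1 r2 tau (ftilde (r1 + r2 - 1) eps beta (S ! k)) _"]
  by simp

lemma Omega_bounds_exist:
  assumes S: "S \<in> frakI r1 r2 tau eps N"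
  shows "\<exists>a :: nat \<Rightarrow> real. \<forall>j\<in>{1..r2}. \<forall>\<kappa>\<in>gsimp S.
            a j \<le> Omega r1 r2 tau eps N j \<kappa> \<and> Omega r1 r2 tau eps N j \<kappa> \<le> a j + 1"
proof -
  have "\<exists>c. \<forall>\<kappa>\<in>gsimp S. c \<le> Omega r1 r2 tau eps N j \<kappa> \<and> Omega r1 r2 tau eps N j \<kappa> \<le> c + 1"
    if j: "j \<in> {1..r2}" for j
  proof -
    let ?s = "r1 + r2 - 1 + j - 1"
    have "?s < r1 + 2 * r2 - 1" and s: "Suc ?s = r1 + r2 - 1 + j" using j number_field_emb_nonempty[OF nf] by auto
    from window_height_bounds[OF frakI_window(2)[OF S] this(1)] obtain c where
      c: "\<forall>v\<in>set S. c \<le> height (step_omega r1 r2 tau eps N ?s) (take (Suc ?s) v) \<and>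
                   height (step_omega r1 r2 tau eps N ?s) (take (Suc ?s) v) \<le> c + 1"
      by blast
    have "c \<le> Omega r1 r2 tau eps N j (vpt v) \<and> Omega r1 r2 tau eps N j (vpt v) \<le> c + 1"
      if "v \<in> set S" for v
    proof -
      have "Omega r1 r2 tau eps N j (vpt v) = height (step_omega r1 r2 tau eps N ?s) (take (Suc ?s) v)"
        unfolding s
        by (rule Omega_vpt_eq_height[OF frakI_window(1)[OF S, rule_format, OF that] number_field_emb_nonempty[OF nf] j])
      then show ?thesis using c that by simp
    qed
    then have vertex: "\<forall>i<length S. c \<le> Omega r1 r2 tau eps N j (vpt (S ! i)) \<and> Omega r1 r2 tau eps N j (vpt (S ! i)) \<le> c + 1"
      by simp
    show ?thesis
    proof (intro exI ballI)
      fix \<kappa> assume "\<kappa> \<in> gsimp S"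
      then obtain t where t: "\<forall>i<length S. 0 \<le> t i" "(\<Sum>i<length S. t i) = 1"
        "\<kappa> = (\<lambda>l. \<Sum>i<length S. t i * vpt (S ! i) l)" unfolding gsimp_def by blast
      show "c \<le> Omega r1 r2 tau eps N j \<kappa> \<and> Omega r1 r2 tau eps N j \<kappa> \<le> c + 1"
        unfolding t(3) Omega_convex_comb by (rule convex_comb_bounds[OF t(1,2) vertex])
    qed
  qed
  then show ?thesis by (intro bchoice ballI)
qed

lemma eps_nonzero: "\<forall>l\<in>{1..r1+r2-1}. eps l \<noteq> 0"
  using units unfolding nf_unit_def by blast

lemma emb_ftilde_real_place:
  assumes S: "S \<in> frakI r1 r2 tau eps N" and k: "k < length S" and i: "i \<in> {1..r1}"
  shows "pos_real (emb r1 r2 tau (ftilde (r1 + r2 - 1) eps beta (S ! k)) i)"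
proof -
  have hom: "is_ring_hom_C (tau i)" using number_field_emb_hom[OF nf] i by simp
  have "totally_positive r1 tau (beta (vint (S ! k)))"
    using tw vint_frakI_vertex[OF S k] unfolding twister_def Let_def by blast
  moreover have "\<forall>l\<in>{1..r1+r2-1}. totally_positive r1 tau (eps l)" using units by blast
  ultimately show ?thesis
    using pos_real_embedding[where tau = tau and c = i, OF hom i] i unfolding emb_def ftilde_def by simp
qed

lemma emb_ftilde_complex_place:
  assumes S: "S \<in> frakI r1 r2 tau eps N" and k: "k < length S" and j: "j \<in> {1..r2}"
    and a: "a j \<le> Omega r1 r2 tau eps N j (vpt (S ! k))" "Omega r1 r2 tau eps N j (vpt (S ! k)) \<le> a j + 1"
  shows "emb r1 r2 tau (ftilde (r1 + r2 - 1) eps beta (S ! k)) (r1 + j) \<in> Hsect ((a j + 1/2) / real (N j))"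
proof -
  let ?\<Omega> = "Omega r1 r2 tau eps N j (vpt (S ! k))" and ?Nj = "real (N j)"
  have Nj: "0 < N j" using N3 j by force
  obtain \<rho> t where \<rho>t: "\<rho> > 0" "\<bar>t\<bar> / ?Nj < 1/4 - 1 / (2 * ?Nj)"
      "emb r1 r2 tau (ftilde (r1 + r2 - 1) eps beta (S ! k)) (r1 + j) =
        complex_of_real \<rho> * exp (2 * complex_of_real pi * \<i> * complex_of_real ((?\<Omega> + t) / ?Nj))"
    using ftilde_embedding_polar[OF number_field_emb_hom[OF nf] j Nj eps_nonzero tw vint_frakI_vertex[OF S k]] j
    unfolding emb_def ftilde_def vpt_vint by auto
  let ?\<theta> = "(?\<Omega> + t - a j - 1/2) / ?Nj"
  have "(?\<Omega> + t) / ?Nj = (a j + 1/2) / ?Nj + ?\<theta>" using Nj by (simp add: field_simps)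
  note polar = \<rho>t(3)[unfolded this]
  have "-1/4 < ?\<theta> \<and> ?\<theta> < 1/4" using sector_angle_bound[of ?Nj t "a j" ?\<Omega>] Nj \<rho>t(2) a by simp
  then show ?thesis using polar \<rho>t(1) unfolding Hsect_def by blast
qed

lemma fmap_convex_comb:
  assumes "S \<in> frakI r1 r2 tau eps N" "\<forall>i<length S. 0 \<le> t i" "(\<Sum>i<length S. t i) = 1"
  shows "fmap A (\<lambda>l. \<Sum>i<length S. t i * vpt (S ! i) l) y = (\<lambda>c. complex_of_real (exp y) *
     (\<Sum>i<length S. complex_of_real (t i) * emb r1 r2 tau (ftilde (r1 + r2 - 1) eps beta (S ! i)) c))"
  unfolding fmap_def A_convex_comb[OF assms] ..

lemma fmap_in_Hcal:
  assumes S: "S \<in> frakI r1 r2 tau eps N" and x: "x \<in> gsimp S"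
    and a: "\<forall>j\<in>{1..r2}. \<forall>\<kappa>\<in>gsimp S. a j \<le> Omega r1 r2 tau eps N j \<kappa> \<and> Omega r1 r2 tau eps N j \<kappa> \<le> a j + 1"
  shows "fmap A x y \<in> Hcal r1 r2 N a"
proof -
  obtain t where t: "\<forall>i<length S. 0 \<le> t i" "(\<Sum>i<length S. t i) = 1"
    "x = (\<lambda>l. \<Sum>i<length S. t i * vpt (S ! i) l)" using x unfolding gsimp_def by blast
  note f = fmap_convex_comb[OF S t(1,2), of y, folded t(3)]
  have "pos_real (fmap A x y i)" if "i \<in> {1..r1}" for i
    unfolding f using emb_ftilde_real_place[OF S _ that] by (intro pos_real_scaled_convex_comb[OF t(1,2)]) auto
  moreover have "fmap A x y (r1 + j) \<in> Hsect ((a j + 1/2) / real (N j))" if "j \<in> {1..r2}" for j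
    unfolding f using emb_ftilde_complex_place[OF S _ that] a that vpt_in_gsimp[of _ S]
    by (intro scaled_convex_comb_in_Hsect[OF t(1,2)]) auto
  moreover have "fmap A x y i = 0" if "i \<notin> {1..r1+r2}" for i
    unfolding f emb_def if_not_P[OF that] by simp
  ultimately show ?thesis unfolding Hcal_def pos_real_iff by blast
qed

lemma fmap_image_simplex_in_Hcal:
  assumes "S \<in> frakI r1 r2 tau eps N"
    and "\<forall>j\<in>{1..r2}. \<forall>\<kappa>\<in>gsimp S. a j \<le> Omega r1 r2 tau eps N j \<kappa> \<and> Omega r1 r2 tau eps N j \<kappa> \<le> a j + 1"
  shows "{fmap A x y | x y. x \<in> gsimp S} \<subseteq> Hcal r1 r2 N a"
  using fmap_in_Hcal[OF assms(1) _ assms(2)] by blast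

lemma fmap_image_in_posCstar: "{fmap A x y | x y. x \<in> frakX r1 r2 tau eps N} \<subseteq> posCstar r1 r2"
proof
  fix z assume "z \<in> {fmap A x y | x y. x \<in> frakX r1 r2 tau eps N}"
  then obtain x y S where "z = fmap A x y" "S \<in> frakI r1 r2 tau eps N" "x \<in> gsimp S"
    unfolding frakX_def by blast
  then show "z \<in> posCstar r1 r2"
    using Omega_bounds_exist fmap_in_Hcal Hcal_subset_posCstar by blast
qed

lemma Hcal_nonzero:
  assumes "z \<in> Hcal r1 r2 N a"
  shows "z \<noteq> (\<lambda>_. 0)"
proof (cases "1 \<le> r1")
  case True
  then have "0 < Re (z 1)" using assms unfolding Hcal_def by auto
  then show ?thesis by auto
next
  case False
  then have "1 \<in> {1..r2}" using number_field_emb_nonempty[OF nf] by auto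
  then have "z (r1 + 1) \<noteq> 0" using assms Hsect_nonzero unfolding Hcal_def by blast
  then show ?thesis by auto
qed

lemma fmap_vertex:
  "S \<in> frakI r1 r2 tau eps N \<Longrightarrow> i < length S \<Longrightarrow>
   fmap A (vpt (S ! i)) 0 = emb r1 r2 tau (ftilde (r1 + r2 - 1) eps beta (S ! i))"
  unfolding fmap_def by (simp add: A_vertex)

lemma fmap_simplex_in_cone:
  assumes S: "S \<in> frakI r1 r2 tau eps N" and x: "x \<in> gsimp S"
  shows "fmap A x y \<in> {(\<lambda>c. \<Sum>i<length S. complex_of_real (t i) * fmap A (vpt (S ! i)) 0 c) | t.
               \<forall>i<length S. 0 \<le> t i} - {(\<lambda>_. 0)}"
proof -
  obtain t where t: "\<forall>i<length S. 0 \<le> t i" "(\<Sum>i<length S. t i) = 1"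
    "x = (\<lambda>l. \<Sum>i<length S. t i * vpt (S ! i) l)" using x unfolding gsimp_def by blast
  have "fmap A x y = (\<lambda>c. \<Sum>i<length S. complex_of_real (exp y * t i) * fmap A (vpt (S ! i)) 0 c)"
  proof
    fix c
    have "fmap A x y c = complex_of_real (exp y) *
        (\<Sum>i<length S. complex_of_real (t i) * emb r1 r2 tau (ftilde (r1 + r2 - 1) eps beta (S ! i)) c)"
      unfolding t(3) fmap_convex_comb[OF S t(1,2)] ..
    also have "\<dots> = (\<Sum>i<length S. complex_of_real (exp y * t i) * fmap A (vpt (S ! i)) 0 c)"
      unfolding sum_distrib_left by (intro sum.cong refl) (simp add: fmap_vertex[OF S])
    finally show "fmap A x y c = (\<Sum>i<length S. complex_of_real (exp y * t i) * fmap A (vpt (S ! i)) 0 c)" .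
  qed
  moreover have "\<forall>i<length S. 0 \<le> exp y * t i" using t(1) by simp
  moreover obtain a where "\<forall>j\<in>{1..r2}. \<forall>\<kappa>\<in>gsimp S.
      a j \<le> Omega r1 r2 tau eps N j \<kappa> \<and> Omega r1 r2 tau eps N j \<kappa> \<le> a j + 1"
    using Omega_bounds_exist[OF S] by blast
  then have "fmap A x y \<noteq> (\<lambda>_. 0)" using Hcal_nonzero fmap_in_Hcal[OF S x] by blast
  ultimately show ?thesis by (intro DiffI CollectI exI[of _ "\<lambda>i. exp y * t i"] conjI) auto
qed

lemma cone_in_fmap_simplex:
  assumes S: "S \<in> frakI r1 r2 tau eps N" and t: "\<forall>i<length S. 0 \<le> t i"
    and F: "F = (\<lambda>c. \<Sum>i<length S. complex_of_real (t i) * fmap A (vpt (S ! i)) 0 c)" "F \<noteq> (\<lambda>_. 0)"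
  shows "\<exists>x y. F = fmap A x y \<and> x \<in> gsimp S"
proof -
  let ?s = "\<Sum>i<length S. t i"
  have "?s \<noteq> 0"
  proof
    assume "?s = 0"
    then have "\<forall>i<length S. t i = 0" using sum_nonneg_eq_0_iff[of "{..<length S}" t] t by simp
    then show False using F by simp
  qed
  then have s: "0 < ?s" using t sum_nonneg[of "{..<length S}" t] by simp
  let ?t = "\<lambda>i. t i / ?s"
  have t': "\<forall>i<length S. 0 \<le> ?t i" "(\<Sum>i<length S. ?t i) = 1"
    using t s by (simp_all add: sum_divide_distrib[symmetric])
  let ?x = "\<lambda>l. \<Sum>i<length S. ?t i * vpt (S ! i) l"
  have "?x \<in> gsimp S" unfolding gsimp_def using t' by (intro CollectI exI[of _ ?t]) simp
  moreover have "fmap A ?x (ln ?s) = F"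
  proof
    fix c
    have scale: "complex_of_real ?s * (complex_of_real (?t i) * e) = complex_of_real (t i) * e" for i e
    proof -
      have "?s * ?t i = t i" using s by simp
      then show ?thesis by (metis mult.assoc of_real_mult)
    qed
    have "complex_of_real ?s *
        (\<Sum>i<length S. complex_of_real (?t i) * emb r1 r2 tau (ftilde (r1 + r2 - 1) eps beta (S ! i)) c) =
        (\<Sum>i<length S. complex_of_real (t i) * fmap A (vpt (S ! i)) 0 c)"
      unfolding sum_distrib_left
    proof (rule sum.cong[OF refl])
      fix i assume "i \<in> {..<length S}"
      then show "complex_of_real ?s * (complex_of_real (?t i) * emb r1 r2 tau (ftilde (r1 + r2 - 1) eps beta (S ! i)) c) =
          complex_of_real (t i) * fmap A (vpt (S ! i)) 0 c"
        using fmap_vertex[OF S, of i] scale by simp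
    qed
    moreover have "exp (ln ?s) = ?s" using s by simp
    ultimately show "fmap A ?x (ln ?s) c = F c" unfolding fmap_convex_comb[OF S t'] F(1) by simp
  qed
  ultimately show ?thesis by (intro exI[of _ ?x] exI[of _ "ln ?s"]) simp
qed

lemma fmap_image_simplex:
  assumes S: "S \<in> frakI r1 r2 tau eps N"
  shows "{fmap A x y | x y. x \<in> gsimp S} =
    {(\<lambda>c. \<Sum>i<length S. complex_of_real (t i) * fmap A (vpt (S ! i)) 0 c) | t. \<forall>i<length S. 0 \<le> t i} - {(\<lambda>_. 0)}"
proof (intro equalityI subsetI)
  fix F assume "F \<in> {fmap A x y | x y. x \<in> gsimp S}"
  then obtain x y where "F = fmap A x y" "x \<in> gsimp S" by blast
  then show "F \<in> {(\<lambda>c. \<Sum>i<length S. complex_of_real (t i) * fmap A (vpt (S ! i)) 0 c) | t.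
      \<forall>i<length S. 0 \<le> t i} - {(\<lambda>_. 0)}"
    using fmap_simplex_in_cone[OF S] by simp
next
  fix F assume "F \<in> {(\<lambda>c. \<Sum>i<length S. complex_of_real (t i) * fmap A (vpt (S ! i)) 0 c) | t.
      \<forall>i<length S. 0 \<le> t i} - {(\<lambda>_. 0)}"
  then obtain t where "\<forall>i<length S. 0 \<le> t i" "F = (\<lambda>c. \<Sum>i<length S. complex_of_real (t i) * fmap A (vpt (S ! i)) 0 c)"
    "F \<noteq> (\<lambda>_. 0)" by blast
  then show "F \<in> {fmap A x y | x y. x \<in> gsimp S}" using cone_in_fmap_simplex[OF S] by blast
qed

lemma emb_mult: "emb r1 r2 tau (g * h) c = emb r1 r2 tau g c * emb r1 r2 tau h c"
  unfolding emb_def using ring_hom_C_mult[OF number_field_emb_hom[OF nf]] by auto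

lemma ftilde_translate:
  assumes v: "length v = r1 + 2 * r2 - 1" and lam: "lam \<in> Lattice (r1 + r2 - 1) r2 N"
  shows "ftilde (r1 + r2 - 1) eps beta (translate lam v) =
    eps_pow (r1 + r2 - 1) eps lam * ftilde (r1 + r2 - 1) eps beta v"
proof -
  have lamI: "lam \<in> int_points (length v)" using lam v dim_eq unfolding Lattice_def by simp
  have "beta (\<lambda>l. vint v l + lam l) = beta (vint v)"
    using tw vint_int_points[of v] v dim_eq lam unfolding twister_def Let_def by auto
  then show ?thesis
    unfolding ftilde_def vint_translate[OF lamI] eps_pow_add[OF eps_nonzero] by (simp add: algebra_simps)
qed

lemma A_list_weight:
  assumes "S \<in> frakI r1 r2 tau eps N" "\<forall>i<length S. 0 \<le> t i" "(\<Sum>i<length S. t i) = 1"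
  shows "A (\<lambda>l. \<Sum>i<length S. t i * vpt (S ! i) l) c =
    (\<Sum>v\<in>set S. complex_of_real (list_weight S t v) * emb r1 r2 tau (ftilde (r1 + r2 - 1) eps beta v) c)"
  unfolding A_convex_comb[OF assms] sum_list_weight_of_real_mult ..

lemma frakI_translate_window:
  "S \<in> frakI r1 r2 tau eps N \<Longrightarrow>
     window (step_omega r1 r2 tau eps N) (r1 + 2 * r2 - 1) (translate lam ` set S)"
  using window_translate[OF frakI_window(2)] step_omega_translate by blast

lemma translate_simplex_list_weight:
  assumes S: "S \<in> frakI r1 r2 tau eps N" and t: "\<forall>i<length S. 0 \<le> t i" "(\<Sum>i<length S. t i) = 1"
    and S': "S' \<in> frakI r1 r2 tau eps N" and t': "\<forall>i<length S'. 0 \<le> t' i" "(\<Sum>i<length S'. t' i) = 1"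
    and lam: "lam \<in> Lattice (r1 + r2 - 1) r2 N"
    and same_point: "(\<lambda>l. \<Sum>i<length S'. t' i * vpt (S' ! i) l) =
      (\<lambda>l. (\<Sum>i<length S. t i * vpt (S ! i) l) + real_of_int (lam l))"
  shows "list_weight (map (translate lam) S) t = list_weight S' t'"
proof (rule window_bary_weights_unique)
  let ?L = "map (translate lam) S"
  have "lam \<in> int_points (length (S ! i))" if "i < length S" for i
    using lam frakI_window(1)[OF S] that dim_eq unfolding Lattice_def by simp
  then have "(\<lambda>l. \<Sum>i<length ?L. t i * vpt (?L ! i) l) = (\<lambda>l. \<Sum>i<length S'. t' i * vpt (S' ! i) l)"
    unfolding same_point using t(2)
    by (simp add: vpt_translate sum.distrib sum_distrib_right[symmetric] algebra_simps)
  then show "bary_weights (set ?L) (list_weight ?L t) (\<lambda>l. \<Sum>i<length S'. t' i * vpt (S' ! i) l)"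
    using bary_weights_list_weight[of ?L t] t by simp
  show "bary_weights (set S') (list_weight S' t') (\<lambda>l. \<Sum>i<length S'. t' i * vpt (S' ! i) l)"
    by (rule bary_weights_list_weight[OF t'])
  show "window (step_omega r1 r2 tau eps N) (r1 + 2 * r2 - 1) (set ?L)"
    using frakI_translate_window[OF S] by simp
  show "window (step_omega r1 r2 tau eps N) (r1 + 2 * r2 - 1) (set S')" by (rule frakI_window(2)[OF S'])
qed

lemma A_translate_simplex:
  assumes S: "S \<in> frakI r1 r2 tau eps N" and t: "\<forall>i<length S. 0 \<le> t i" "(\<Sum>i<length S. t i) = 1"
    and lam: "lam \<in> Lattice (r1 + r2 - 1) r2 N"
  shows "(\<Sum>i<length S. complex_of_real (t i) * emb r1 r2 tau (ftilde (r1 + r2 - 1) eps beta (translate lam (S ! i))) c) =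
    emb r1 r2 tau (eps_pow (r1 + r2 - 1) eps lam) c * A (\<lambda>l. \<Sum>i<length S. t i * vpt (S ! i) l) c"
  unfolding A_convex_comb[OF S t] sum_distrib_left
proof (rule sum.cong[OF refl])
  fix i assume "i \<in> {..<length S}"
  then have "ftilde (r1 + r2 - 1) eps beta (translate lam (S ! i)) =
      eps_pow (r1 + r2 - 1) eps lam * ftilde (r1 + r2 - 1) eps beta (S ! i)"
    using frakI_window(1)[OF S] by (intro ftilde_translate[OF _ lam]) simp
  then show "complex_of_real (t i) * emb r1 r2 tau (ftilde (r1 + r2 - 1) eps beta (translate lam (S ! i))) c =
      emb r1 r2 tau (eps_pow (r1 + r2 - 1) eps lam) c *
      (complex_of_real (t i) * emb r1 r2 tau (ftilde (r1 + r2 - 1) eps beta (S ! i)) c)"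
    by (simp add: emb_mult mult.left_commute)
qed

lemma fmap_translate:
  assumes x: "x \<in> frakX r1 r2 tau eps N" and x': "x' \<in> frakX r1 r2 tau eps N"
    and lam: "lam \<in> Lattice (r1 + r2 - 1) r2 N" and x'_eq: "x' = (\<lambda>l. x l + real_of_int (lam l))"
  shows "fmap A x' y = (\<lambda>c. emb r1 r2 tau (eps_pow (r1 + r2 - 1) eps lam) c * fmap A x y c)"
proof -
  let ?G = "\<lambda>c v. emb r1 r2 tau (ftilde (r1 + r2 - 1) eps beta v) c"
  obtain S t where S: "S \<in> frakI r1 r2 tau eps N" and t: "\<forall>i<length S. 0 \<le> t i" "(\<Sum>i<length S. t i) = 1"
    and x_eq: "x = (\<lambda>l. \<Sum>i<length S. t i * vpt (S ! i) l)"
    using x unfolding frakX_def gsimp_def by blast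
  obtain S' t' where S': "S' \<in> frakI r1 r2 tau eps N" and t': "\<forall>i<length S'. 0 \<le> t' i" "(\<Sum>i<length S'. t' i) = 1"
    and x'_conv: "x' = (\<lambda>l. \<Sum>i<length S'. t' i * vpt (S' ! i) l)"
    using x' unfolding frakX_def gsimp_def by blast
  let ?L = "map (translate lam) S"
  have "list_weight ?L t = list_weight S' t'"
    using translate_simplex_list_weight[OF S t S' t' lam] x'_conv x'_eq x_eq by simp
  then have "A x' c = (\<Sum>v\<in>set ?L. complex_of_real (list_weight ?L t v) * ?G c v)" for c
    unfolding x'_conv A_list_weight[OF S' t'] by (rule sum_list_weight_cong[symmetric])
  also have "\<dots> c = emb r1 r2 tau (eps_pow (r1 + r2 - 1) eps lam) c * A x c" for c
    unfolding sum_list_weight_of_real_mult x_eq using A_translate_simplex[OF S t lam] by simp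
  finally show ?thesis unfolding fmap_def by (simp add: algebra_simps)
qed

end

theorem lemma9:
  fixes r1 r2 :: nat
    and tau :: "nat \<Rightarrow> 'a::field_char_0 \<Rightarrow> complex"
    and eps :: "nat \<Rightarrow> 'a"
    and N :: "nat \<Rightarrow> nat"
    and beta :: "(nat \<Rightarrow> int) \<Rightarrow> 'a"
    and A :: "(nat \<Rightarrow> real) \<Rightarrow> (nat \<Rightarrow> complex)"
  assumes nf: "number_field_emb r1 r2 tau"
    and units: "\<forall>l\<in>{1..r1+r2-1}. nf_unit (eps l) \<and> totally_positive r1 tau (eps l)"
    and indep: "\<forall>e :: nat \<Rightarrow> int. eps_pow (r1+r2-1) eps e = 1 \<longrightarrow> (\<forall>l\<in>{1..r1+r2-1}. e l = 0)"
    and N3: "\<forall>j\<in>{1..r2}. N j \<ge> 3"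
    and tw: "twister r1 r2 tau N beta"
    and A: "admissible_A r1 r2 tau eps N beta A"
  shows
    \<comment> \<open>(i)\<close>
    "(\<forall>S\<in>frakI r1 r2 tau eps N.
        (\<exists>a :: nat \<Rightarrow> real. \<forall>j\<in>{1..r2}. \<forall>\<kappa>\<in>gsimp S.
            a j \<le> Omega r1 r2 tau eps N j \<kappa> \<and> Omega r1 r2 tau eps N j \<kappa> \<le> a j + 1) \<and>
        (\<forall>a :: nat \<Rightarrow> real. (\<forall>j\<in>{1..r2}. \<forall>\<kappa>\<in>gsimp S.
            a j \<le> Omega r1 r2 tau eps N j \<kappa> \<and> Omega r1 r2 tau eps N j \<kappa> \<le> a j + 1) \<longrightarrow>
          {fmap A x y | x y. x \<in> gsimp S} \<subseteq> Hcal r1 r2 N a))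
     \<and> {fmap A x y | x y. x \<in> frakX r1 r2 tau eps N} \<subseteq> posCstar r1 r2
     \<comment> \<open>(ii)\<close>
     \<and> (\<forall>S\<in>frakI r1 r2 tau eps N.
          {fmap A x y | x y. x \<in> gsimp S} =
          {(\<lambda>c. \<Sum>i<length S. complex_of_real (t i) * fmap A (vpt (S ! i)) 0 c) | t.
               \<forall>i<length S. t i \<ge> 0} - {(\<lambda>_. 0)})
     \<comment> \<open>(iii)\<close>
     \<and> (\<forall>x\<in>frakX r1 r2 tau eps N. \<forall>x'\<in>frakX r1 r2 tau eps N. \<forall>lam\<in>Lattice (r1+r2-1) r2 N. \<forall>y::real.
          x' = (\<lambda>l. x l + real_of_int (lam l)) \<longrightarrow>
          fmap A x' y = (\<lambda>c. emb r1 r2 tau (eps_pow (r1+r2-1) eps lam) c * fmap A x y c))"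
proof -
  note setting = nf units N3 tw A
  show ?thesis
    by (intro conjI ballI allI impI; rule Omega_bounds_exist[OF setting] fmap_image_simplex_in_Hcal[OF setting]
        fmap_image_in_posCstar[OF setting] fmap_image_simplex[OF setting] fmap_translate[OF setting];
        assumption)
qed

end
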